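(* Let $k\ge 2$ be a fixed integer. There is a constant $C>0$ depending only on $k$ such that the following holds. Let $G$ be an undirected graph containing $t$ cycles of length $2k$, and let $A,B\subseteq V(G)$ (not necessarily disjoint). Then $$|E(A,B)| \leq C\left(|A|\cdot|B|^{1/k} + |B|\cdot|A|^{1/k} + t^{1/(2k)}\sqrt{|A|\cdot|B|}\right).$$
   Context: $E(A,B)$ denotes the set of edges of $G$ having one endpoint in $A$ and the other endpoint in $B$. A cycle of length $2k$ is a subgraph isomorphic to $C_{2k}$. *)

theory Defs
  imports Complex_Main
begin

definition simple_graph :: "'a set \<Rightarrow> 'a set set \<Rightarrow> bool" where
  "simple_graph V Es \<longleftrightarrow> finite V \<and> (\<forall>e\<in>Es. e \<subseteq> V \<and> card e = 2)"

definition edges_between :: "'a set set \<Rightarrow> 'a set \<Rightarrow> 'a set \<Rightarrow> 'a set set" where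
  "edges_between Es A B = {e \<in> Es. \<exists>u v. u \<in> A \<and> v \<in> B \<and> e = {u, v}}"

text \<open>Cycles of length L as subgraphs: identified by their edge sets
{f 0 f 1, f 1 f 2, ..., f (L-1) f 0} for L distinct vertices f 0..f (L-1).\<close>
definition cycles_of_length :: "'a set \<Rightarrow> 'a set set \<Rightarrow> nat \<Rightarrow> 'a set set set" where
  "cycles_of_length V Es L = {F. \<exists>f :: nat \<Rightarrow> 'a. inj_on f {0..<L} \<and> f ` {0..<L} \<subseteq> V \<and>
      (\<forall>i<L. {f i, f ((i + 1) mod L)} \<in> Es) \<and>
      F = (\<lambda>i. {f i, f ((i + 1) mod L)}) ` {0..<L}}"

end

(* Let e be the number of edges between disjoint vertex sets X and Y, with m = |X| and n = |Y|,
   and count closed walks of length 2k in the bipartite graph between X and Y.  The numbers of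
   walks of length 2j between vertices of X form a log-convex sequence (Cauchy-Schwarz), which
   yields at least (e^2 / (m n))^k closed 2k-walks.  Conversely, a closed 2k-walk either runs
   around a 2k-cycle, and each cycle carries at most (2k)^(2k) walks, or it revisits a vertex v
   and splits there into two closed walks at v; log-convexity at v and Young's inequality bound
   these by half of all closed 2k-walks plus (8k^2)^k times the sum of the k-th powers of the
   degrees.  Vertices of degree more than 4^k times the average are few, so by induction on m + n
   they span few edges; if the remaining graph keeps half of the edges, its degrees are bounded
   and the two estimates combine into the bound.  For overlapping A and B the edges inside the
   intersection are reduced to a cut carrying a quarter of them. *)

theory Submission
  imports Defs "HOL-Analysis.Convex"
begin

section \<open>Walks\<close>

definition walks ::
  "'a set \<Rightarrow> ('a \<Rightarrow> 'a \<Rightarrow> bool) \<Rightarrow> nat \<Rightarrow> 'a \<Rightarrow> 'a \<Rightarrow> 'a list set" where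
  "walks U R l u w = {xs. length xs = Suc l \<and> set xs \<subseteq> U \<and> xs ! 0 = u \<and> xs ! l = w \<and>
      (\<forall>i<l. R (xs ! i) (xs ! Suc i))}"

definition nwalks :: "'a set \<Rightarrow> ('a \<Rightarrow> 'a \<Rightarrow> bool) \<Rightarrow> nat \<Rightarrow> 'a \<Rightarrow> 'a \<Rightarrow> real" where
  "nwalks U R l u w = real (card (walks U R l u w))"

lemma finite_walks: "finite U \<Longrightarrow> finite (walks U R l u w)"
  by (rule finite_subset[OF _ finite_lists_length_eq[of U "Suc l"]]) (auto simp: walks_def)

lemma length_walks: "xs \<in> walks U R l u w \<Longrightarrow> length xs = Suc l"
  by (simp add: walks_def)

lemma nth_walks_in: "xs \<in> walks U R l u w \<Longrightarrow> i \<le> l \<Longrightarrow> xs ! i \<in> U"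
  using nth_mem[of i xs] by (auto simp: walks_def)

lemma nwalks_nonneg: "0 \<le> nwalks U R l u w"
  by (simp add: nwalks_def)

lemma take_walks:
  assumes "xs \<in> walks U R (a + b) u w"
  shows "take (Suc a) xs \<in> walks U R a u (xs ! a)"
  using assms set_take_subset[of "Suc a" xs] by (auto simp: walks_def)

lemma drop_walks:
  assumes "xs \<in> walks U R (a + b) u w"
  shows "drop a xs \<in> walks U R b (xs ! a) w"
  using assms set_drop_subset[of a xs] by (auto simp: walks_def add.commute add.left_commute)

lemma append_walks:
  assumes ys: "ys \<in> walks U R a u v" and zs: "zs \<in> walks U R b v w"
  shows "ys @ tl zs \<in> walks U R (a + b) u w" and "(ys @ tl zs) ! a = v"
    and "take (Suc a) (ys @ tl zs) = ys" and "drop a (ys @ tl zs) = zs"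
proof -
  have ly: "length ys = Suc a" and lz: "length zs = Suc b" using ys zs by (auto simp: walks_def)
  have zs_eq: "zs = v # tl zs" using zs lz by (cases zs) (auto simp: walks_def)
  show "take (Suc a) (ys @ tl zs) = ys" using ly by simp
  show drop: "drop a (ys @ tl zs) = zs"
    using ys ly Cons_nth_drop_Suc[of a ys] zs_eq by (simp add: walks_def flip: Cons_nth_drop_Suc)
  show "(ys @ tl zs) ! a = v" using ys ly by (simp add: nth_append walks_def)
  have lx: "length (ys @ tl zs) = Suc (a + b)" using ly lz by simp
  have nth1: "(ys @ tl zs) ! i = ys ! i" if "i \<le> a" for i using that ly by (simp add: nth_append)
  have nth2: "(ys @ tl zs) ! (a + j) = zs ! j" if "j \<le> b" for j
    using nth_drop[of a "ys @ tl zs" j] lx unfolding drop by simp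
  show "ys @ tl zs \<in> walks U R (a + b) u w"
    unfolding walks_def
  proof (intro CollectI conjI allI impI)
    show "set (ys @ tl zs) \<subseteq> U" using ys zs by (auto simp: walks_def dest: list.set_sel(2)[rotated])
    show "(ys @ tl zs) ! 0 = u" using nth1[of 0] ys by (simp add: walks_def)
    show "(ys @ tl zs) ! (a + b) = w" using nth2[of b] zs by (simp add: walks_def)
    fix i assume i: "i < a + b"
    show "R ((ys @ tl zs) ! i) ((ys @ tl zs) ! Suc i)"
    proof (cases "i < a")
      case True
      then show ?thesis using nth1[of i] nth1[of "Suc i"] ys by (simp add: walks_def)
    next
      case False
      then obtain j where "i = a + j" "j < b" using i by (metis add_diff_inverse_nat nat_add_left_cancel_less)
      then show ?thesis using nth2[of j] nth2[of "Suc j"] zs by (simp add: walks_def)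
    qed
  qed (use lx in simp)
qed

lemma bij_betw_walks_split:
  "bij_betw (\<lambda>xs. (take (Suc a) xs, drop a xs))
     {xs \<in> walks U R (a + b) u w. xs ! a = v \<and> Q (drop a xs)}
     (walks U R a u v \<times> {zs \<in> walks U R b v w. Q zs})"
proof (rule bij_betw_byWitness[where f' = "\<lambda>(ys, zs). ys @ tl zs"])
  show "\<forall>xs \<in> {xs \<in> walks U R (a + b) u w. xs ! a = v \<and> Q (drop a xs)}.
      (\<lambda>(ys, zs). ys @ tl zs) (take (Suc a) xs, drop a xs) = xs"
  proof
    fix xs assume "xs \<in> {xs \<in> walks U R (a + b) u w. xs ! a = v \<and> Q (drop a xs)}"
    then have "Suc a \<le> length xs" by (auto simp: walks_def)
    then show "(\<lambda>(ys, zs). ys @ tl zs) (take (Suc a) xs, drop a xs) = xs"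
      by (simp add: tl_drop flip: drop_Suc)
  qed
  show "\<forall>p \<in> walks U R a u v \<times> {zs \<in> walks U R b v w. Q zs}.
      (\<lambda>xs. (take (Suc a) xs, drop a xs)) ((\<lambda>(ys, zs). ys @ tl zs) p) = p"
    using append_walks(3,4) by auto
  show "(\<lambda>xs. (take (Suc a) xs, drop a xs)) ` {xs \<in> walks U R (a + b) u w. xs ! a = v \<and> Q (drop a xs)}
      \<subseteq> walks U R a u v \<times> {zs \<in> walks U R b v w. Q zs}"
  proof
    fix p assume "p \<in> (\<lambda>xs. (take (Suc a) xs, drop a xs)) `
        {xs \<in> walks U R (a + b) u w. xs ! a = v \<and> Q (drop a xs)}"
    then obtain xs where "xs \<in> walks U R (a + b) u w" "xs ! a = v" "Q (drop a xs)"
      and "p = (take (Suc a) xs, drop a xs)" by blast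
    then show "p \<in> walks U R a u v \<times> {zs \<in> walks U R b v w. Q zs}"
      using take_walks drop_walks by fastforce
  qed
  show "(\<lambda>(ys, zs). ys @ tl zs) ` (walks U R a u v \<times> {zs \<in> walks U R b v w. Q zs})
      \<subseteq> {xs \<in> walks U R (a + b) u w. xs ! a = v \<and> Q (drop a xs)}"
  proof
    fix xs assume "xs \<in> (\<lambda>(ys, zs). ys @ tl zs) ` (walks U R a u v \<times> {zs \<in> walks U R b v w. Q zs})"
    then obtain ys zs where ys: "ys \<in> walks U R a u v" and zs: "zs \<in> walks U R b v w"
      and "Q zs" and "xs = ys @ tl zs" by auto
    then show "xs \<in> {xs \<in> walks U R (a + b) u w. xs ! a = v \<and> Q (drop a xs)}"
      using append_walks(1,2,4)[OF ys zs] by simp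
  qed
qed

lemma card_walks_through:
  "card {xs \<in> walks U R (a + b) u w. xs ! a = v \<and> Q (drop a xs)} =
   card (walks U R a u v) * card {zs \<in> walks U R b v w. Q zs}"
  using bij_betw_same_card[OF bij_betw_walks_split] by (simp add: card_cartesian_product)

lemma nwalks_add:
  assumes "finite U"
  shows "nwalks U R (a + b) u w = (\<Sum>v\<in>U. nwalks U R a u v * nwalks U R b v w)"
proof -
  have split: "walks U R (a + b) u w = (\<Union>v\<in>U. {xs \<in> walks U R (a + b) u w. xs ! a = v \<and> True})"
    using nth_walks_in[of _ U R "a + b" u w a] by auto
  have "card (walks U R (a + b) u w) =
      (\<Sum>v\<in>U. card {xs \<in> walks U R (a + b) u w. xs ! a = v \<and> True})"
    by (subst split, rule card_UN_disjoint) (auto simp: assms finite_walks)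
  then show ?thesis
    by (simp add: nwalks_def card_walks_through[where Q = "\<lambda>_. True", simplified])
qed

lemma nwalks_0: "nwalks U R 0 u w = (if u = w \<and> u \<in> U then 1 else 0)"
proof -
  have "walks U R 0 u w = (if u = w \<and> u \<in> U then {[u]} else {})"
    by (auto simp: walks_def length_Suc_conv)
  then show ?thesis by (auto simp: nwalks_def)
qed

lemma nwalks_1: "nwalks U R (Suc 0) u w = (if u \<in> U \<and> w \<in> U \<and> R u w then 1 else 0)"
proof -
  have "walks U R (Suc 0) u w = (if u \<in> U \<and> w \<in> U \<and> R u w then {[u, w]} else {})"
    by (auto simp: walks_def length_Suc_conv)
  then show ?thesis by (simp add: nwalks_def)
qed

lemma rev_walks:
  assumes "symp R" and xs: "xs \<in> walks U R l u w"
  shows "rev xs \<in> walks U R l w u"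
  unfolding walks_def
proof (intro CollectI conjI allI impI)
  have len: "length xs = Suc l" using xs by (simp add: walks_def)
  then show "length (rev xs) = Suc l" "rev xs ! 0 = w" "rev xs ! l = u" "set (rev xs) \<subseteq> U"
    using xs by (simp_all add: walks_def rev_nth)
  fix i assume i: "i < l"
  have "R (xs ! (l - Suc i)) (xs ! Suc (l - Suc i))" using xs i by (simp add: walks_def)
  then have "R (xs ! (l - i)) (xs ! (l - Suc i))"
    using i \<open>symp R\<close> by (simp add: Suc_diff_Suc sympD)
  then show "R (rev xs ! i) (rev xs ! Suc i)" using len i by (simp add: rev_nth)
qed

lemma nwalks_sym:
  assumes "symp R"
  shows "nwalks U R l u w = nwalks U R l w u"
proof -
  have "rev ` walks U R l u w = walks U R l w u"
    using rev_walks[OF assms] by (auto intro!: image_eqI[where f = rev] rev_walks[OF assms])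
  then show ?thesis unfolding nwalks_def by (metis card_image inj_on_def rev_rev_ident)
qed

lemma nwalks_2_closed:
  assumes "finite U" and "symp R" and "v \<in> U"
  shows "nwalks U R 2 v v = real (card {z \<in> U. R v z})"
proof -
  have "nwalks U R 2 v v = (\<Sum>z\<in>U. nwalks U R 1 v z * nwalks U R 1 z v)"
    using nwalks_add[OF \<open>finite U\<close>, of R 1 1 v v] by (simp only: one_add_one)
  also have "\<dots> = (\<Sum>z\<in>U. if R v z then 1 else 0)"
    using assms by (intro sum.cong) (auto simp: nwalks_1 dest: sympD)
  finally show ?thesis using \<open>finite U\<close> by (simp add: sum.If_cases Int_def conj_commute)
qed

lemma sum_nwalks_square:
  assumes "finite U" and "symp R"
  shows "(\<Sum>z\<in>U. (nwalks U R p v z)\<^sup>2) = nwalks U R (2 * p) v v"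
  using nwalks_add[OF \<open>finite U\<close>, of R p p v v] nwalks_sym[OF \<open>symp R\<close>, of U p _ v]
  by (simp add: mult_2 power2_eq_square)

lemma nwalks_Cauchy_Schwarz:
  assumes "finite U" and "symp R"
  shows "(nwalks U R (p + q) u w)\<^sup>2 \<le> nwalks U R (2 * p) u u * nwalks U R (2 * q) w w"
proof -
  have "nwalks U R (p + q) u w = (\<Sum>z\<in>U. nwalks U R p u z * nwalks U R q w z)"
    using nwalks_add[OF \<open>finite U\<close>] nwalks_sym[OF \<open>symp R\<close>, of U q _ w] by simp
  then show ?thesis
    using Cauchy_Schwarz_ineq_sum[of "\<lambda>z. nwalks U R p u z" "\<lambda>z. nwalks U R q w z" U]
    by (simp add: sum_nwalks_square[OF assms])
qed

lemma walks_alternate: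
  assumes bip: "\<And>a b. R a b \<Longrightarrow> a \<in> X \<longleftrightarrow> b \<notin> X" and xs: "xs \<in> walks U R l u w"
  shows "i \<le> l \<Longrightarrow> xs ! i \<in> X \<longleftrightarrow> (u \<in> X \<longleftrightarrow> even i)"
proof (induction i)
  case 0 then show ?case using xs by (simp add: walks_def)
next
  case (Suc i)
  then have "R (xs ! i) (xs ! Suc i)" using xs by (simp add: walks_def)
  then show ?case using Suc bip by auto
qed

lemma nwalks_odd_closed:
  assumes "\<And>a b. R a b \<Longrightarrow> a \<in> X \<longleftrightarrow> b \<notin> X" and "odd l"
  shows "nwalks U R l v v = 0"
proof -
  have "walks U R l v v = {}"
    using walks_alternate[OF assms(1), where U = U and l = l and u = v and w = v and i = l] \<open>odd l\<close>
    by (force simp: walks_def)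
  then show ?thesis by (simp add: nwalks_def)
qed

section \<open>Log-convex sequences\<close>

definition log_convex_upto :: "(nat \<Rightarrow> real) \<Rightarrow> nat \<Rightarrow> bool" where
  "log_convex_upto b k \<longleftrightarrow>
    (\<forall>s. 1 \<le> s \<longrightarrow> s < k \<longrightarrow> (b s)\<^sup>2 \<le> b (s - 1) * b (s + 1))"

lemma log_convex_uptoD:
  "log_convex_upto b k \<Longrightarrow> 1 \<le> s \<Longrightarrow> s < k \<Longrightarrow> (b s)\<^sup>2 \<le> b (s - 1) * b (s + 1)"
  by (simp add: log_convex_upto_def)

lemma log_convex_upto_vanish:
  assumes "\<And>s. 0 \<le> b s" and "log_convex_upto b k" and "b 1 = 0"
  shows "1 \<le> s \<Longrightarrow> s < k \<Longrightarrow> b s = 0"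
proof (induction s rule: nat_induct_at_least)
  case base then show ?case using assms(3) by simp
next
  case (Suc s)
  have "(b (Suc s))\<^sup>2 \<le> b s * b (Suc s + 1)" using log_convex_uptoD[OF assms(2), of "Suc s"] Suc by simp
  then show ?case using Suc by simp
qed

lemma log_convex_upto_pos:
  assumes nonneg: "\<And>s. 0 \<le> b s" and lc: "log_convex_upto b k" and "0 < b 0" "0 < b 1"
  shows "s \<le> k \<Longrightarrow> 0 < b s"
proof (induction s rule: less_induct)
  case (less s)
  show ?case
  proof (cases "s \<le> 1")
    case True
    then show ?thesis using assms by (cases s) auto
  next
    case False
    define r where "r = s - 2"
    have r: "s = Suc (Suc r)" using False by (simp add: r_def)
    have "0 < b (Suc r)" using less r by simp
    then have "0 < (b (Suc r))\<^sup>2" by simp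
    also have "\<dots> \<le> b r * b s" using log_convex_uptoD[OF lc, of "Suc r"] less r by simp
    finally show ?thesis using nonneg[of r] by (simp add: zero_less_mult_iff)
  qed
qed

lemma log_convex_upto_cross_mono:
  assumes pos: "\<And>s. s \<le> k \<Longrightarrow> 0 < b s" and lc: "log_convex_upto b k" and s: "1 \<le> s"
  shows "s + d \<le> k \<Longrightarrow> b s * b (s + d - 1) \<le> b (s - 1) * b (s + d)"
proof (induction d)
  case 0 then show ?case by simp
next
  case (Suc d)
  define t where "t = s + d"
  have t: "1 \<le> t" "t < k" using Suc s by (auto simp: t_def)
  have IH: "b s * b (t - 1) \<le> b (s - 1) * b t" using Suc by (simp add: t_def)
  have p: "0 < b (t - 1)" "0 < b t" "0 < b s" "0 < b (s - 1)" using pos t Suc by (auto simp: t_def)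
  have "(b s * b t) * b (t - 1) = (b s * b (t - 1)) * b t" by simp
  also have "\<dots> \<le> b (s - 1) * (b t)\<^sup>2" using IH p by (simp add: power2_eq_square)
  also have "\<dots> \<le> b (s - 1) * (b (t - 1) * b (t + 1))"
    using log_convex_uptoD[OF lc t] p by (simp add: mult_left_mono)
  finally have "b s * b t \<le> b (s - 1) * b (t + 1)" using p(1) by (simp add: ac_simps)
  then show ?case by (simp add: t_def)
qed

lemma log_convex_upto_ratio_pow:
  assumes nonneg: "\<And>s. 0 \<le> b s" and lc: "log_convex_upto b k" and b0: "0 < b 0"
  shows "j \<le> k \<Longrightarrow> (b 1 / b 0) ^ j * b 0 \<le> b j"
proof (cases "b 1 = 0")
  case True
  then show "j \<le> k \<Longrightarrow> ?thesis" using nonneg[of j] by (cases j) auto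
next
  case False
  then have pos: "\<And>s. s \<le> k \<Longrightarrow> 0 < b s"
    using log_convex_upto_pos[OF nonneg lc b0] nonneg[of 1] by simp
  show "j \<le> k \<Longrightarrow> ?thesis"
  proof (induction j)
    case 0 then show ?case by simp
  next
    case (Suc j)
    have "(b 1 / b 0) ^ Suc j * b 0 = (b 1 / b 0) * ((b 1 / b 0) ^ j * b 0)" by simp
    also have "\<dots> \<le> (b 1 / b 0) * b j"
      using Suc pos[of 1] b0 by (intro mult_left_mono) auto
    also have "\<dots> \<le> b (Suc j)"
      using log_convex_upto_cross_mono[OF pos lc, of 1 j] Suc b0 by (simp add: field_simps)
    finally show ?case .
  qed
qed

lemma log_convex_upto_product_le:
  assumes nonneg: "\<And>s. 0 \<le> b s" and lc: "log_convex_upto b k" and b0: "0 < b 0"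
    and s: "1 \<le> s" "s < k"
  shows "b s * b (k - s) \<le> b 1 * b (k - 1)"
proof (cases "b 1 = 0")
  case True
  then show ?thesis using log_convex_upto_vanish[OF nonneg lc True] s by simp
next
  case False
  then have pos: "\<And>s. s \<le> k \<Longrightarrow> 0 < b s"
    using log_convex_upto_pos[OF nonneg lc b0] nonneg[of 1] by simp
  have half: "b j * b (k - j) \<le> b 1 * b (k - 1)" if "1 \<le> j" "2 * j \<le> k + 1" for j
    using that
  proof (induction j rule: nat_induct_at_least)
    case base then show ?case by simp
  next
    case (Suc j)
    have "b (Suc j) * b (Suc j + (k - 2 * j - 1) - 1) \<le> b (Suc j - 1) * b (Suc j + (k - 2 * j - 1))"
      by (rule log_convex_upto_cross_mono[OF pos lc]) (use Suc in auto)
    moreover have "Suc j + (k - 2 * j - 1) - 1 = k - Suc j" "Suc j + (k - 2 * j - 1) = k - j"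
      using Suc by auto
    ultimately show ?case using Suc by simp
  qed
  show ?thesis
  proof (cases "2 * s \<le> k + 1")
    case True then show ?thesis using half s by simp
  next
    case False
    then show ?thesis using half[of "k - s"] s by (simp add: mult.commute)
  qed
qed

lemma log_convex_upto_power_le:
  assumes nonneg: "\<And>s. 0 \<le> b s" and lc: "log_convex_upto b k" and b0: "b 0 = 1" and k: "2 \<le> k"
  shows "b (k - 1) ^ k \<le> b k ^ (k - 1)"
proof (cases "b 1 = 0")
  case True
  then have "b (k - 1) = 0" using log_convex_upto_vanish[OF nonneg lc True, of "k - 1"] k by simp
  then show ?thesis using k nonneg[of k] by (simp add: power_0_left)
next
  case False
  then have pos: "\<And>s. s \<le> k \<Longrightarrow> 0 < b s"
    using log_convex_upto_pos[OF nonneg lc] nonneg[of 1] b0 by simp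
  have "s + 1 \<le> k \<Longrightarrow> b s ^ (s + 1) \<le> b (s + 1) ^ s" for s
  proof (induction s)
    case 0 then show ?case using b0 by simp
  next
    case (Suc s)
    have p: "0 < b s" "0 < b (Suc s)" "0 < b (Suc s + 1)" using pos Suc by auto
    have "b (Suc s) ^ s * b (Suc s) ^ (s + 2) = ((b (Suc s))\<^sup>2) ^ (s + 1)"
      by (simp add: mult_2 flip: power_add power_mult)
    also have "\<dots> \<le> (b s * b (Suc s + 1)) ^ (s + 1)"
      using log_convex_uptoD[OF lc, of "Suc s"] Suc p by (intro power_mono) auto
    also have "\<dots> = b s ^ (s + 1) * b (Suc s + 1) ^ (s + 1)" by (simp add: power_mult_distrib)
    also have "\<dots> \<le> b (s + 1) ^ s * b (Suc s + 1) ^ (s + 1)"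
      using Suc p by (simp add: mult_right_mono)
    finally show ?case using p by (simp add: mult.commute mult_le_cancel_left)
  qed
  from this[of "k - 1"] show ?thesis using k by simp
qed

lemma young_mult_le:
  fixes x y z d :: real
  assumes "0 \<le> x" "0 \<le> y" "0 \<le> z" "x ^ k \<le> z ^ (k - 1)" "0 < d" "2 \<le> k"
  shows "y * x \<le> d * z + y ^ k / d ^ (k - 1)"
proof (cases "(y / d) ^ (k - 1) \<le> x")
  case True
  have xk: "x ^ k = x * x ^ (k - 1)" using \<open>2 \<le> k\<close> by (cases k) auto
  have "(y * x) ^ (k - 1) = (y / d) ^ (k - 1) * x ^ (k - 1) * d ^ (k - 1)"
    using assms by (simp add: power_mult_distrib power_divide)
  also have "\<dots> \<le> x ^ k * d ^ (k - 1)"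
    using True assms xk by (simp add: mult_right_mono)
  also have "\<dots> \<le> (d * z) ^ (k - 1)"
    using assms by (simp add: power_mult_distrib mult_right_mono mult.commute)
  also have "k - 1 = Suc (k - 2)" using \<open>2 \<le> k\<close> by simp
  finally have "y * x \<le> d * z"
    by (rule power_le_imp_le_base) (use assms in simp)
  moreover have "0 \<le> y ^ k / d ^ (k - 1)" using assms by simp
  ultimately show ?thesis by linarith
next
  case False
  have "y * x \<le> y * (y / d) ^ (k - 1)" using False assms by (simp add: mult_left_mono)
  also have "\<dots> = y ^ k / d ^ (k - 1)"
    using \<open>2 \<le> k\<close> by (cases k) (auto simp: power_divide)
  finally show ?thesis using assms by (simp add: add_increasing)
qed

section \<open>Closed walks and cycles of length 2k\<close>

(* Bounds the closed walks at v that return to v after r steps.  Odd r is excluded by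
   bipartiteness; for even r, log-convexity of s \<mapsto> nwalks U R (2 * s) v v reduces to r = 2. *)
lemma closed_nwalks_mult_le:
  assumes fin: "finite U" and sym: "symp R" and bip: "\<And>a b. R a b \<Longrightarrow> a \<in> X \<longleftrightarrow> b \<notin> X"
    and v: "v \<in> U" and k: "2 \<le> k" and r: "1 \<le> r" "r < 2 * k" and d: "0 < d"
  shows "nwalks U R r v v * nwalks U R (2 * k - r) v v
    \<le> d * nwalks U R (2 * k) v v + (nwalks U R 2 v v) ^ k / d ^ (k - 1)"
proof (cases "odd r")
  case True
  then show ?thesis using nwalks_odd_closed[OF bip True] d by (simp add: nwalks_nonneg)
next
  case False
  then obtain s where s: "r = 2 * s" by (auto elim: evenE)
  define b where "b = (\<lambda>s. nwalks U R (2 * s) v v)"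
  have nonneg: "\<And>s. 0 \<le> b s" by (simp add: b_def nwalks_nonneg)
  have b0: "b 0 = 1" using v by (simp add: b_def nwalks_0)
  have lc: "log_convex_upto b k"
    unfolding log_convex_upto_def
  proof (intro allI impI)
    fix s :: nat assume "1 \<le> s"
    then have "(s - 1) + (s + 1) = 2 * s" by simp
    then show "(b s)\<^sup>2 \<le> b (s - 1) * b (s + 1)"
      using nwalks_Cauchy_Schwarz[OF fin sym, of "s - 1" "s + 1" v v] by (simp only: b_def)
  qed
  have "b s * b (k - s) \<le> b 1 * b (k - 1)"
    by (rule log_convex_upto_product_le[OF nonneg lc]) (use b0 r s in auto)
  also have "\<dots> \<le> d * b k + b 1 ^ k / d ^ (k - 1)"
    using young_mult_le[OF nonneg nonneg nonneg log_convex_upto_power_le[OF nonneg lc b0 k] d k]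
    by (simp add: mult.commute)
  finally show ?thesis using s by (simp add: b_def right_diff_distrib')
qed

lemma card_closed_walks_repeat:
  assumes fin: "finite U" and ij: "i < j" "j \<le> L"
  shows "real (card {xs \<in> walks U R L u u. xs ! i = xs ! j}) =
    (\<Sum>v\<in>U. nwalks U R i u v * (nwalks U R (j - i) v v * nwalks U R (L - j) v u))"
proof -
  have drop_nth: "drop i xs ! (j - i) = xs ! j" if "xs \<in> walks U R L u u" for xs
    using that ij length_walks[OF that] by simp
  have L: "L = i + (L - i)" and Li: "L - i = (j - i) + (L - j)" using ij by auto
  have "{xs \<in> walks U R L u u. xs ! i = xs ! j} =
      (\<Union>v\<in>U. {xs \<in> walks U R (i + (L - i)) u u. xs ! i = v \<and> drop i xs ! (j - i) = v})"
    using drop_nth nth_walks_in[of _ U R L u u j] ij by (auto simp flip: L)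
  then have "card {xs \<in> walks U R L u u. xs ! i = xs ! j} =
      (\<Sum>v\<in>U. card {xs \<in> walks U R (i + (L - i)) u u. xs ! i = v \<and> drop i xs ! (j - i) = v})"
    by (simp only:, intro card_UN_disjoint) (auto simp: fin finite_walks)
  also have "\<dots> = (\<Sum>v\<in>U. card (walks U R i u v) * card {zs \<in> walks U R (L - i) v u. zs ! (j - i) = v})"
  proof (intro sum.cong refl)
    fix v
    show "card {xs \<in> walks U R (i + (L - i)) u u. xs ! i = v \<and> drop i xs ! (j - i) = v} =
        card (walks U R i u v) * card {zs \<in> walks U R (L - i) v u. zs ! (j - i) = v}"
      by (rule card_walks_through[where Q = "\<lambda>zs. zs ! (j - i) = v"])
  qed
  also have "\<dots> = (\<Sum>v\<in>U. card (walks U R i u v) *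
      (card (walks U R (j - i) v v) * card (walks U R (L - j) v u)))"
    using card_walks_through[of U R "j - i" "L - j" _ u _ "\<lambda>_. True"] by (simp flip: Li)
  finally show ?thesis by (simp add: nwalks_def)
qed

lemma sum_card_closed_walks_repeat:
  assumes fin: "finite U" and ij: "i < j" "j \<le> L"
  shows "(\<Sum>u\<in>U. real (card {xs \<in> walks U R L u u. xs ! i = xs ! j})) =
    (\<Sum>v\<in>U. nwalks U R (j - i) v v * nwalks U R (L - (j - i)) v v)"
proof -
  have "(\<Sum>u\<in>U. real (card {xs \<in> walks U R L u u. xs ! i = xs ! j})) =
      (\<Sum>u\<in>U. \<Sum>v\<in>U. nwalks U R i u v * (nwalks U R (j - i) v v * nwalks U R (L - j) v u))"
    by (simp add: card_closed_walks_repeat[OF assms])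
  also have "\<dots> = (\<Sum>v\<in>U. \<Sum>u\<in>U. nwalks U R i u v * (nwalks U R (j - i) v v * nwalks U R (L - j) v u))"
    by (rule sum.swap)
  also have "\<dots> = (\<Sum>v\<in>U. nwalks U R (j - i) v v * (\<Sum>u\<in>U. nwalks U R (L - j) v u * nwalks U R i u v))"
    by (simp add: sum_distrib_left ac_simps)
  also have "\<dots> = (\<Sum>v\<in>U. nwalks U R (j - i) v v * nwalks U R (L - (j - i)) v v)"
    using ij by (simp add: nwalks_add[OF fin, symmetric])
  finally show ?thesis .
qed

lemma card_noninjective_closed_walks_le:
  assumes "finite U"
  shows "real (card {xs \<in> walks U R L u u. \<not> inj_on (nth xs) {0..<L}}) \<le>
    (\<Sum>(i, j)\<in>{(i, j). i < j \<and> j < L}. real (card {xs \<in> walks U R L u u. xs ! i = xs ! j}))"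
proof -
  have fin_pairs: "finite {(i, j). i < j \<and> j < L}"
    by (rule finite_subset[of _ "{0..<L} \<times> {0..<L}"]) auto
  have "{xs \<in> walks U R L u u. \<not> inj_on (nth xs) {0..<L}} \<subseteq>
      (\<Union>(i, j)\<in>{(i, j). i < j \<and> j < L}. {xs \<in> walks U R L u u. xs ! i = xs ! j})"
    by (auto simp: inj_on_def) (metis linorder_neqE_nat)
  then have "card {xs \<in> walks U R L u u. \<not> inj_on (nth xs) {0..<L}} \<le>
      card (\<Union>(i, j)\<in>{(i, j). i < j \<and> j < L}. {xs \<in> walks U R L u u. xs ! i = xs ! j})"
    by (rule card_mono[rotated]) (auto simp: fin_pairs finite_walks assms)
  also have "\<dots> \<le> (\<Sum>(i, j)\<in>{(i, j). i < j \<and> j < L}. card {xs \<in> walks U R L u u. xs ! i = xs ! j})"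
    using card_UN_le[OF fin_pairs] by (simp add: case_prod_beta)
  finally show ?thesis by (simp add: case_prod_beta flip: of_nat_sum)
qed

lemma sum_card_noninjective_closed_walks_le:
  assumes fin: "finite U" and sym: "symp R" and bip: "\<And>a b. R a b \<Longrightarrow> a \<in> X \<longleftrightarrow> b \<notin> X"
    and k: "2 \<le> k" and d: "0 < d"
  shows "(\<Sum>u\<in>U. real (card {xs \<in> walks U R (2 * k) u u. \<not> inj_on (nth xs) {0..<2 * k}})) \<le>
    real ((2 * k)\<^sup>2) * (d * (\<Sum>v\<in>U. nwalks U R (2 * k) v v) + (\<Sum>v\<in>U. (nwalks U R 2 v v) ^ k) / d ^ (k - 1))"
proof -
  define P where "P = {(i, j). i < j \<and> j < 2 * k}"
  define M where "M = d * (\<Sum>v\<in>U. nwalks U R (2 * k) v v) + (\<Sum>v\<in>U. (nwalks U R 2 v v) ^ k) / d ^ (k - 1)"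
  have "P \<subseteq> {0..<2 * k} \<times> {0..<2 * k}" by (auto simp: P_def)
  then have card_P: "card P \<le> (2 * k)\<^sup>2"
    using card_mono[of "{0..<2 * k} \<times> {0..<2 * k}" P] by (simp add: power2_eq_square)
  have "0 \<le> M" using d by (simp add: M_def nwalks_nonneg sum_nonneg)
  have "(\<Sum>u\<in>U. real (card {xs \<in> walks U R (2 * k) u u. \<not> inj_on (nth xs) {0..<2 * k}})) \<le>
      (\<Sum>u\<in>U. \<Sum>(i, j)\<in>P. real (card {xs \<in> walks U R (2 * k) u u. xs ! i = xs ! j}))"
    unfolding P_def by (intro sum_mono card_noninjective_closed_walks_le[OF fin])
  also have "\<dots> = (\<Sum>(i, j)\<in>P. \<Sum>u\<in>U. real (card {xs \<in> walks U R (2 * k) u u. xs ! i = xs ! j}))"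
    by (subst sum.swap) (simp add: case_prod_beta)
  also have "\<dots> = (\<Sum>(i, j)\<in>P. \<Sum>v\<in>U. nwalks U R (j - i) v v * nwalks U R (2 * k - (j - i)) v v)"
    by (intro sum.cong refl) (auto simp: P_def sum_card_closed_walks_repeat[OF fin])
  also have "\<dots> \<le> (\<Sum>(i, j)\<in>P. \<Sum>v\<in>U. d * nwalks U R (2 * k) v v + (nwalks U R 2 v v) ^ k / d ^ (k - 1))"
  proof (intro sum_mono, clarify)
    fix i j assume "(i, j) \<in> P"
    then show "(\<Sum>v\<in>U. nwalks U R (j - i) v v * nwalks U R (2 * k - (j - i)) v v) \<le>
        (\<Sum>v\<in>U. d * nwalks U R (2 * k) v v + (nwalks U R 2 v v) ^ k / d ^ (k - 1))"
      by (intro sum_mono closed_nwalks_mult_le[OF fin sym bip _ k _ _ d]) (auto simp: P_def)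
  qed
  also have "\<dots> = real (card P) * M"
    by (simp add: M_def sum.distrib sum_distrib_left sum_divide_distrib)
  also have "\<dots> \<le> real ((2 * k)\<^sup>2) * M"
    using of_nat_mono[OF card_P] \<open>0 \<le> M\<close> by (rule mult_right_mono)
  finally show ?thesis by (simp add: M_def)
qed

definition walk_cycle :: "nat \<Rightarrow> 'a list \<Rightarrow> 'a set set" where
  "walk_cycle L xs = (\<lambda>i. {xs ! i, xs ! ((i + 1) mod L)}) ` {0..<L}"

lemma walk_cycle_in_cycles_of_length:
  assumes "U \<subseteq> V" and RE: "\<And>a b. R a b \<Longrightarrow> {a, b} \<in> Es" and "1 \<le> L"
    and xs: "xs \<in> walks U R L u u" and "inj_on (nth xs) {0..<L}"
  shows "walk_cycle L xs \<in> cycles_of_length V Es L"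
  unfolding cycles_of_length_def walk_cycle_def
proof (intro CollectI exI conjI allI impI)
  show "nth xs ` {0..<L} \<subseteq> V" using nth_walks_in[OF xs] \<open>U \<subseteq> V\<close> by auto
  fix i assume i: "i < L"
  have "R (xs ! i) (xs ! Suc i)" using xs i by (simp add: walks_def)
  moreover have "xs ! ((i + 1) mod L) = xs ! Suc i"
    using xs i by (cases "Suc i = L") (auto simp: walks_def)
  ultimately show "{xs ! i, xs ! ((i + 1) mod L)} \<in> Es" using RE by simp
qed (use assms in simp_all)

lemma finite_cycles_of_length:
  assumes "finite V" and "\<forall>e\<in>Es. e \<subseteq> V"
  shows "finite (cycles_of_length V Es L)"
  by (rule finite_subset[of _ "Pow (Pow V)"]) (use assms in \<open>auto simp: cycles_of_length_def\<close>)

(* Such a list is determined by its first L entries, which lie among the at most L vertices of F. *)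
lemma card_closed_lists_with_cycle_le:
  assumes "1 \<le> L" and "finite C"
    and C: "\<And>xs. xs \<in> C \<Longrightarrow> length xs = Suc L \<and> xs ! L = xs ! 0 \<and> walk_cycle L xs = F"
  shows "card C \<le> L ^ L"
proof (cases "C = {}")
  case False
  then obtain xs0 where xs0: "xs0 \<in> C" by blast
  define S where "S = nth xs0 ` {0..<L}"
  have "\<Union>F \<subseteq> S"
    using C[OF xs0] \<open>1 \<le> L\<close> by (auto simp: S_def walk_cycle_def)
  then have take_in: "take L xs \<in> {ys. set ys \<subseteq> S \<and> length ys = L}" if "xs \<in> C" for xs
    using C[OF that] by (fastforce simp: walk_cycle_def in_set_conv_nth)
  have "inj_on (take L) C"
  proof (rule inj_onI)
    fix xs ys assume xs: "xs \<in> C" and ys: "ys \<in> C" and eq: "take L xs = take L ys"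
    have "xs = take L xs @ [xs ! 0]" "ys = take L ys @ [ys ! 0]"
      using C[OF xs] C[OF ys] take_Suc_conv_app_nth[of L xs] take_Suc_conv_app_nth[of L ys] by auto
    moreover have "xs ! 0 = ys ! 0" using eq \<open>1 \<le> L\<close> nth_take[of 0 L xs] nth_take[of 0 L ys] by simp
    ultimately show "xs = ys" using eq by metis
  qed
  then have "card C \<le> card {ys. set ys \<subseteq> S \<and> length ys = L}"
    using take_in by (intro card_inj_on_le) (auto simp: S_def finite_lists_length_eq)
  also have "\<dots> = card S ^ L" by (simp add: S_def card_lists_length_eq)
  also have "\<dots> \<le> L ^ L" using card_image_le[of "{0..<L}" "nth xs0"] by (simp add: S_def power_mono)
  finally show ?thesis .
qed simp

lemma sum_card_injective_closed_walks_le: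
  assumes "finite V" and "\<forall>e\<in>Es. e \<subseteq> V" and "U \<subseteq> V"
    and "\<And>a b. R a b \<Longrightarrow> {a, b} \<in> Es" and "1 \<le> L"
  shows "(\<Sum>u\<in>U. real (card {xs \<in> walks U R L u u. inj_on (nth xs) {0..<L}}))
    \<le> real (L ^ L) * real (card (cycles_of_length V Es L))"
proof -
  define Cy where "Cy = cycles_of_length V Es L"
  define I where "I = (\<Union>u\<in>U. {xs \<in> walks U R L u u. inj_on (nth xs) {0..<L}})"
  have fin: "finite U" using assms finite_subset by blast
  then have fin_I: "finite I" by (simp add: I_def finite_walks)
  have "(\<Sum>u\<in>U. card {xs \<in> walks U R L u u. inj_on (nth xs) {0..<L}}) = card I"
    unfolding I_def
    by (rule card_UN_disjoint[symmetric]) (auto simp: fin finite_walks, auto simp: walks_def)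
  also have "I = (\<Union>F\<in>Cy. {xs \<in> I. walk_cycle L xs = F})"
    using walk_cycle_in_cycles_of_length[OF assms(3,4,5)] by (auto simp: I_def Cy_def)
  also have "card \<dots> \<le> (\<Sum>F\<in>Cy. card {xs \<in> I. walk_cycle L xs = F})"
    by (rule card_UN_le) (simp add: Cy_def finite_cycles_of_length[OF assms(1,2)])
  also have "\<dots> \<le> (\<Sum>F\<in>Cy. L ^ L)"
    using fin_I by (intro sum_mono card_closed_lists_with_cycle_le[OF \<open>1 \<le> L\<close>])
      (simp, auto simp: I_def walks_def)
  finally show ?thesis by (simp add: Cy_def mult.commute flip: of_nat_sum of_nat_mult of_nat_power)
qed

lemma nwalks_split_injective:
  assumes "finite U"
  shows "nwalks U R L u w = real (card {xs \<in> walks U R L u w. inj_on (nth xs) {0..<L}})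
    + real (card {xs \<in> walks U R L u w. \<not> inj_on (nth xs) {0..<L}})"
  using card_Int_Diff[OF finite_walks[OF assms], where B = "{xs. inj_on (nth xs) {0..<L}}"]
  by (simp add: nwalks_def Int_def set_diff_eq)

lemma sum_closed_nwalks_le:
  assumes finV: "finite V" and EV: "\<forall>e\<in>Es. e \<subseteq> V" and UV: "U \<subseteq> V"
    and sym: "symp R" and RE: "\<And>a b. R a b \<Longrightarrow> {a, b} \<in> Es"
    and bip: "\<And>a b. R a b \<Longrightarrow> a \<in> X \<longleftrightarrow> b \<notin> X" and k: "2 \<le> k"
  shows "(\<Sum>v\<in>U. nwalks U R (2 * k) v v) \<le>
    2 * real ((2 * k) ^ (2 * k)) * real (card (cycles_of_length V Es (2 * k)))
    + (8 * real k ^ 2) ^ k * (\<Sum>v\<in>U. (nwalks U R 2 v v) ^ k)"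
proof -
  have fin: "finite U" using finV UV finite_subset by blast
  define h where "h = (\<Sum>v\<in>U. nwalks U R (2 * k) v v)"
  define D where "D = (\<Sum>v\<in>U. (nwalks U R 2 v v) ^ k)"
  define t where "t = real (card (cycles_of_length V Es (2 * k)))"
  \<comment> \<open>With this d the walks that revisit a vertex account for at most half of h.\<close>
  define d :: real where "d = 1 / (8 * real k ^ 2)"
  have "0 < d" using k by (simp add: d_def)
  have "h = (\<Sum>u\<in>U. real (card {xs \<in> walks U R (2 * k) u u. inj_on (nth xs) {0..<2 * k}}))
      + (\<Sum>u\<in>U. real (card {xs \<in> walks U R (2 * k) u u. \<not> inj_on (nth xs) {0..<2 * k}}))"
    by (simp add: h_def nwalks_split_injective[OF fin] sum.distrib)
  also have "\<dots> \<le> real ((2 * k) ^ (2 * k)) * t + real ((2 * k)\<^sup>2) * (d * h + D / d ^ (k - 1))"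
    unfolding t_def h_def D_def
    using sum_card_injective_closed_walks_le[OF finV EV UV RE, where L = "2 * k"]
      sum_card_noninjective_closed_walks_le[OF fin sym bip k \<open>0 < d\<close>] k
    by (intro add_mono) simp_all
  also have "real ((2 * k)\<^sup>2) * (d * h + D / d ^ (k - 1)) = h / 2 + (8 * real k ^ 2) ^ k * D / 2"
  proof -
    have "(x :: real) ^ k = x * x ^ (k - 1)" for x using k by (cases k) auto
    then have "(8 * real k ^ 2) ^ k = (8 * real k ^ 2) * (8 * real k ^ 2) ^ (k - 1)" .
    then have B: "real ((2 * k)\<^sup>2) / d ^ (k - 1) = (8 * real k ^ 2) ^ k / 2"
      by (simp add: d_def power_one_over)
    have A: "real ((2 * k)\<^sup>2) * d = 1 / 2" using k by (simp add: d_def)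
    have "real ((2 * k)\<^sup>2) * (d * h + D / d ^ (k - 1)) =
        (real ((2 * k)\<^sup>2) * d) * h + (real ((2 * k)\<^sup>2) / d ^ (k - 1)) * D"
      by (simp add: algebra_simps)
    then show ?thesis unfolding A B by simp
  qed
  finally show ?thesis by (simp add: h_def D_def t_def)
qed

section \<open>Walks between the vertices of one side\<close>

definition nwalks_within ::
  "'a set \<Rightarrow> ('a \<Rightarrow> 'a \<Rightarrow> bool) \<Rightarrow> nat \<Rightarrow> 'a set \<Rightarrow> real" where
  "nwalks_within U R l X = (\<Sum>x\<in>X. \<Sum>x'\<in>X. nwalks U R l x x')"

lemma nwalks_within_add:
  assumes "finite U"
  shows "nwalks_within U R (p + q) X =
    (\<Sum>z\<in>U. (\<Sum>x\<in>X. nwalks U R p x z) * (\<Sum>x'\<in>X. nwalks U R q z x'))"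
proof -
  have "nwalks_within U R (p + q) X = (\<Sum>x\<in>X. \<Sum>x'\<in>X. \<Sum>z\<in>U. nwalks U R p x z * nwalks U R q z x')"
    by (simp add: nwalks_within_def nwalks_add[OF assms])
  also have "\<dots> = (\<Sum>z\<in>U. \<Sum>x\<in>X. \<Sum>x'\<in>X. nwalks U R p x z * nwalks U R q z x')"
    by (simp only: sum.swap[where A = X and B = U])
  also have "\<dots> = (\<Sum>z\<in>U. (\<Sum>x\<in>X. nwalks U R p x z) * (\<Sum>x'\<in>X. nwalks U R q z x'))"
    by (simp add: sum_product)
  finally show ?thesis .
qed

lemma nwalks_within_even:
  assumes "finite U" and "symp R"
  shows "nwalks_within U R (2 * p) X = (\<Sum>z\<in>U. (\<Sum>x\<in>X. nwalks U R p x z)\<^sup>2)"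
  using nwalks_within_add[OF \<open>finite U\<close>, of R p p X] nwalks_sym[OF \<open>symp R\<close>, of U p]
  by (simp add: mult_2 power2_eq_square)

lemma log_convex_nwalks_within:
  assumes fin: "finite U" and sym: "symp R"
  shows "log_convex_upto (\<lambda>j. nwalks_within U R (2 * j) X) k"
  unfolding log_convex_upto_def
proof (intro allI impI)
  fix j :: nat assume "1 \<le> j"
  then have e: "2 * j = (j - 1) + (j + 1)" by simp
  have "nwalks_within U R (2 * j) X =
      (\<Sum>z\<in>U. (\<Sum>x\<in>X. nwalks U R (j - 1) x z) * (\<Sum>x\<in>X. nwalks U R (j + 1) x z))"
    unfolding e nwalks_within_add[OF fin]
    by (rule sum.cong[OF refl], rule arg_cong[where f = "\<lambda>t. _ * t"], rule sum.cong[OF refl],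
        rule nwalks_sym[OF sym])
  moreover have "(\<Sum>z\<in>U. (\<Sum>x\<in>X. nwalks U R (j - 1) x z) * (\<Sum>x\<in>X. nwalks U R (j + 1) x z))\<^sup>2
      \<le> (\<Sum>z\<in>U. (\<Sum>x\<in>X. nwalks U R (j - 1) x z)\<^sup>2) *
        (\<Sum>z\<in>U. (\<Sum>x\<in>X. nwalks U R (j + 1) x z)\<^sup>2)"
    by (rule Cauchy_Schwarz_ineq_sum)
  ultimately show "(nwalks_within U R (2 * j) X)\<^sup>2 \<le>
      nwalks_within U R (2 * (j - 1)) X * nwalks_within U R (2 * (j + 1)) X"
    by (simp only: nwalks_within_even[OF fin sym])
qed

lemma nwalks_within_0:
  assumes "X \<subseteq> U" and "finite X"
  shows "nwalks_within U R 0 X = real (card X)"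
proof -
  have "nwalks_within U R 0 X = (\<Sum>x\<in>X. \<Sum>x'\<in>X. if x = x' then 1 else 0)"
    unfolding nwalks_within_def using assms by (intro sum.cong refl) (auto simp: nwalks_0)
  then show ?thesis using assms by (simp add: sum.delta)
qed

lemma edge_count_square_le_nwalks_within_2:
  assumes fin: "finite U" and "symp R" and "X \<subseteq> U" and "Y \<subseteq> U"
  shows "(real (card {p \<in> X \<times> Y. R (fst p) (snd p)}))\<^sup>2 / real (card Y) \<le> nwalks_within U R 2 X"
proof -
  have fin_XY: "finite X" "finite Y" using fin assms finite_subset by auto
  define a where "a = (\<lambda>z. \<Sum>x\<in>X. nwalks U R 1 x z)"
  have "real (card {p \<in> X \<times> Y. R (fst p) (snd p)}) = (\<Sum>p\<in>X \<times> Y. if R (fst p) (snd p) then 1 else 0)"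
    using fin_XY by (simp add: sum.If_cases Int_def conj_commute)
  also have "\<dots> = (\<Sum>x\<in>X. \<Sum>y\<in>Y. if R x y then 1 else 0)"
    by (simp add: sum.cartesian_product split_def)
  also have "\<dots> = (\<Sum>y\<in>Y. a y)"
    unfolding a_def using assms by (subst sum.swap) (auto simp: nwalks_1 intro!: sum.cong)
  finally have "(real (card {p \<in> X \<times> Y. R (fst p) (snd p)}))\<^sup>2 / real (card Y) =
      (\<Sum>y\<in>Y. a y * 1)\<^sup>2 / real (card Y)"
    by simp
  also have "\<dots> \<le> (\<Sum>y\<in>Y. (a y)\<^sup>2)"
    using Cauchy_Schwarz_ineq_sum[of a "\<lambda>_. 1" Y] by (cases "card Y = 0") (auto simp: divide_le_eq sum_nonneg)
  also have "\<dots> \<le> (\<Sum>z\<in>U. (a z)\<^sup>2)"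
    by (rule sum_mono2[OF fin \<open>Y \<subseteq> U\<close>]) simp
  also have "\<dots> = nwalks_within U R 2 X"
    using nwalks_within_even[OF fin \<open>symp R\<close>, of 1] by (simp add: a_def)
  finally show ?thesis .
qed

lemma nwalks_within_le_sum_closed:
  assumes fin: "finite U" and sym: "symp R" and "X \<subseteq> U"
  shows "nwalks_within U R (2 * k) X \<le> real (card X) * (\<Sum>x\<in>X. nwalks U R (2 * k) x x)"
proof -
  define a where "a = (\<lambda>x. nwalks U R (2 * k) x x)"
  have "nwalks U R (2 * k) x x' \<le> sqrt (a x) * sqrt (a x')" for x x'
    using nwalks_Cauchy_Schwarz[OF fin sym, of k k x x']
    by (simp add: a_def mult_2 real_le_rsqrt flip: real_sqrt_mult)
  then have "nwalks_within U R (2 * k) X \<le> (\<Sum>x\<in>X. \<Sum>x'\<in>X. sqrt (a x) * sqrt (a x'))"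
    unfolding nwalks_within_def by (intro sum_mono)
  also have "\<dots> = (\<Sum>x\<in>X. sqrt (a x) * 1)\<^sup>2"
    by (simp add: power2_eq_square sum_product)
  also have "\<dots> \<le> (\<Sum>x\<in>X. (sqrt (a x))\<^sup>2) * (\<Sum>x\<in>X. 1\<^sup>2)" by (rule Cauchy_Schwarz_ineq_sum)
  also have "\<dots> = real (card X) * (\<Sum>x\<in>X. a x)" by (simp add: a_def nwalks_nonneg)
  finally show ?thesis by (simp add: a_def)
qed

(* The sequence j \<mapsto> nwalks_within U R (2 * j) X is log-convex, starts at card X, and its next
   term is at least e^2 / card Y. *)
lemma power_edge_density_le_sum_closed_nwalks:
  assumes fin: "finite U" and sym: "symp R" and XU: "X \<subseteq> U" and YU: "Y \<subseteq> U" and "X \<noteq> {}"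
  shows "((real (card {p \<in> X \<times> Y. R (fst p) (snd p)}))\<^sup>2 / (real (card X) * real (card Y))) ^ k
    \<le> (\<Sum>x\<in>X. nwalks U R (2 * k) x x)"
proof -
  define S where "S = (\<lambda>j. nwalks_within U R (2 * j) X)"
  define m where "m = real (card X)"
  have "0 < m" using assms fin finite_subset by (auto simp: m_def card_gt_0_iff)
  have S0: "S 0 = m" using XU finite_subset[OF XU fin] by (simp add: S_def m_def nwalks_within_0)
  define e where "e = real (card {p \<in> X \<times> Y. R (fst p) (snd p)})"
  have "e\<^sup>2 / (m * real (card Y)) = (e\<^sup>2 / real (card Y)) / m" by (simp add: mult.commute)
  also have "\<dots> \<le> S 1 / m"
    using edge_count_square_le_nwalks_within_2[OF fin sym XU YU] \<open>0 < m\<close>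
    by (intro divide_right_mono) (simp_all add: S_def e_def)
  finally have "(e\<^sup>2 / (m * real (card Y))) ^ k \<le> (S 1 / m) ^ k"
    using \<open>0 < m\<close> by (intro power_mono) auto
  also have "\<dots> = (S 1 / S 0) ^ k * S 0 / m" using S0 \<open>0 < m\<close> by simp
  also have "\<dots> \<le> S k / m"
    using log_convex_upto_ratio_pow[OF _ log_convex_nwalks_within[OF fin sym], of X k k] S0 \<open>0 < m\<close>
    by (intro divide_right_mono) (auto simp: S_def nwalks_within_def nwalks_nonneg sum_nonneg)
  also have "\<dots> \<le> (\<Sum>x\<in>X. nwalks U R (2 * k) x x)"
    using nwalks_within_le_sum_closed[OF fin sym XU, of k] \<open>0 < m\<close> by (simp add: S_def m_def field_simps)
  finally show ?thesis by (simp add: m_def e_def)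
qed

section \<open>Edges between two vertex sets\<close>

(* Counts ordered pairs, so an edge inside X \<inter> Y is counted twice. *)
definition edge_pairs :: "'a set set \<Rightarrow> 'a set \<Rightarrow> 'a set \<Rightarrow> nat" where
  "edge_pairs Es X Y = card {p \<in> X \<times> Y. {fst p, snd p} \<in> Es}"

definition degree_in :: "'a set set \<Rightarrow> 'a set \<Rightarrow> 'a \<Rightarrow> nat" where
  "degree_in Es Y x = card {y \<in> Y. {x, y} \<in> Es}"

definition cross_adj :: "'a set set \<Rightarrow> 'a set \<Rightarrow> 'a set \<Rightarrow> 'a \<Rightarrow> 'a \<Rightarrow> bool" where
  "cross_adj Es X Y x y \<longleftrightarrow> {x, y} \<in> Es \<and> (x \<in> X \<and> y \<in> Y \<or> x \<in> Y \<and> y \<in> X)"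

lemma symp_cross_adj: "symp (cross_adj Es X Y)"
  by (auto simp: symp_def cross_adj_def insert_commute)

lemma cross_adj_commute: "cross_adj Es X Y = cross_adj Es Y X"
  by (auto simp: cross_adj_def fun_eq_iff)

lemma edge_pairs_le_card:
  assumes "finite X" "finite Y"
  shows "edge_pairs Es X Y \<le> card X * card Y"
proof -
  have "edge_pairs Es X Y \<le> card (X \<times> Y)"
    unfolding edge_pairs_def using assms by (intro card_mono) auto
  then show ?thesis by (simp add: card_cartesian_product)
qed

lemma edge_pairs_commute: "edge_pairs Es X Y = edge_pairs Es Y X"
proof -
  have "bij_betw prod.swap {p \<in> X \<times> Y. {fst p, snd p} \<in> Es} {p \<in> Y \<times> X. {fst p, snd p} \<in> Es}"
    by (rule bij_betwI[where g = prod.swap]) (auto simp: insert_commute)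
  then show ?thesis unfolding edge_pairs_def by (rule bij_betw_same_card)
qed

lemma sum_degree_in:
  assumes "finite X" "finite Y"
  shows "(\<Sum>x\<in>X. real (degree_in Es Y x)) = real (edge_pairs Es X Y)"
proof -
  have "real (edge_pairs Es X Y) = (\<Sum>p\<in>X \<times> Y. if {fst p, snd p} \<in> Es then 1 else 0)"
    unfolding edge_pairs_def using assms by (simp add: sum.If_cases Int_def conj_commute)
  also have "\<dots> = (\<Sum>x\<in>X. \<Sum>y\<in>Y. if {x, y} \<in> Es then 1 else 0)"
    by (simp add: sum.cartesian_product split_def)
  finally show ?thesis
    using assms by (simp add: degree_in_def sum.If_cases Int_def conj_commute)
qed

lemma nwalks_2_cross_adj:
  assumes "finite (X \<union> Y)" and "X \<inter> Y = {}" and "v \<in> X"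
  shows "nwalks (X \<union> Y) (cross_adj Es X Y) 2 v v = real (degree_in Es Y v)"
proof -
  have "{z \<in> X \<union> Y. cross_adj Es X Y v z} = {y \<in> Y. {v, y} \<in> Es}"
    using assms by (auto simp: cross_adj_def)
  then show ?thesis
    using nwalks_2_closed[OF assms(1) symp_cross_adj] assms by (simp add: degree_in_def)
qed

lemma sum_power_le:
  fixes f :: "'a \<Rightarrow> real"
  assumes "\<And>x. x \<in> X \<Longrightarrow> 0 \<le> f x" and "\<And>x. x \<in> X \<Longrightarrow> f x \<le> D" and "1 \<le> k"
  shows "(\<Sum>x\<in>X. f x ^ k) \<le> D ^ (k - 1) * (\<Sum>x\<in>X. f x)"
proof -
  have "f x ^ k \<le> D ^ (k - 1) * f x" if "x \<in> X" for x
  proof -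
    have "f x ^ k = f x ^ (k - 1) * f x" using \<open>1 \<le> k\<close> by (simp flip: power_Suc2)
    also have "\<dots> \<le> D ^ (k - 1) * f x" using assms that by (intro mult_right_mono power_mono) auto
    finally show ?thesis .
  qed
  then show ?thesis by (simp add: sum_distrib_left sum_mono)
qed

lemma sum_nwalks_2_power_cross_adj_le:
  assumes fin: "finite X" "finite Y" and disj: "X \<inter> Y = {}" and k: "1 \<le> k"
    and D1: "\<And>x. x \<in> X \<Longrightarrow> real (degree_in Es Y x) \<le> D1"
    and D2: "\<And>y. y \<in> Y \<Longrightarrow> real (degree_in Es X y) \<le> D2"
  shows "(\<Sum>v\<in>X \<union> Y. (nwalks (X \<union> Y) (cross_adj Es X Y) 2 v v) ^ k)
    \<le> (D1 ^ (k - 1) + D2 ^ (k - 1)) * real (edge_pairs Es X Y)"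
proof -
  have "nwalks (X \<union> Y) (cross_adj Es X Y) 2 y y = real (degree_in Es X y)" if "y \<in> Y" for y
    using nwalks_2_cross_adj[of Y X] fin disj that by (simp add: Un_commute Int_commute cross_adj_commute)
  moreover have "nwalks (X \<union> Y) (cross_adj Es X Y) 2 x x = real (degree_in Es Y x)" if "x \<in> X" for x
    using nwalks_2_cross_adj[of X Y] fin disj that by simp
  ultimately have "(\<Sum>v\<in>X \<union> Y. (nwalks (X \<union> Y) (cross_adj Es X Y) 2 v v) ^ k) =
      (\<Sum>x\<in>X. real (degree_in Es Y x) ^ k) + (\<Sum>y\<in>Y. real (degree_in Es X y) ^ k)"
    by (simp add: sum.union_disjoint fin disj)
  also have "\<dots> \<le> (D1 ^ (k - 1) + D2 ^ (k - 1)) * real (edge_pairs Es X Y)"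
    using sum_power_le[of X "\<lambda>x. real (degree_in Es Y x)" D1 k]
      sum_power_le[of Y "\<lambda>y. real (degree_in Es X y)" D2 k] D1 D2 k
      sum_degree_in[OF fin] sum_degree_in[OF fin(2,1)]
    by (simp add: edge_pairs_commute[of Es Y X] distrib_right add_mono)
  finally show ?thesis .
qed

lemma edge_pairs_power_le_bounded_degree:
  assumes finV: "finite V" and EV: "\<forall>e\<in>Es. e \<subseteq> V" and XYV: "X \<union> Y \<subseteq> V"
    and disj: "X \<inter> Y = {}" and k: "2 \<le> k" and "X \<noteq> {}"
    and D1: "\<And>x. x \<in> X \<Longrightarrow> real (degree_in Es Y x) \<le> D1"
    and D2: "\<And>y. y \<in> Y \<Longrightarrow> real (degree_in Es X y) \<le> D2"
  shows "((real (edge_pairs Es X Y))\<^sup>2 / (real (card X) * real (card Y))) ^ k \<le>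
    2 * real ((2 * k) ^ (2 * k)) * real (card (cycles_of_length V Es (2 * k)))
    + (8 * real k ^ 2) ^ k * (D1 ^ (k - 1) + D2 ^ (k - 1)) * real (edge_pairs Es X Y)"
proof -
  define U where "U = X \<union> Y"
  define R where "R = cross_adj Es X Y"
  have fin: "finite U" using finV XYV finite_subset by (auto simp: U_def)
  have "{p \<in> X \<times> Y. R (fst p) (snd p)} = {p \<in> X \<times> Y. {fst p, snd p} \<in> Es}"
    by (auto simp: R_def cross_adj_def)
  then have "((real (edge_pairs Es X Y))\<^sup>2 / (real (card X) * real (card Y))) ^ k
      \<le> (\<Sum>x\<in>X. nwalks U R (2 * k) x x)"
    using power_edge_density_le_sum_closed_nwalks[OF fin _ _ _ \<open>X \<noteq> {}\<close>, of R Y k]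
    by (simp add: U_def R_def symp_cross_adj edge_pairs_def)
  also have "\<dots> \<le> (\<Sum>v\<in>U. nwalks U R (2 * k) v v)"
    by (rule sum_mono2[OF fin]) (auto simp: U_def nwalks_nonneg)
  also have "\<dots> \<le> 2 * real ((2 * k) ^ (2 * k)) * real (card (cycles_of_length V Es (2 * k)))
      + (8 * real k ^ 2) ^ k * (\<Sum>v\<in>U. (nwalks U R 2 v v) ^ k)"
    using disj XYV k by (intro sum_closed_nwalks_le[OF finV EV _ _, where X = X])
      (auto simp: U_def R_def cross_adj_def symp_cross_adj)
  also have "\<dots> \<le> 2 * real ((2 * k) ^ (2 * k)) * real (card (cycles_of_length V Es (2 * k)))
      + (8 * real k ^ 2) ^ k * ((D1 ^ (k - 1) + D2 ^ (k - 1)) * real (edge_pairs Es X Y))"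
    using sum_nwalks_2_power_cross_adj_le[of X Y k Es D1 D2] fin disj k D1 D2
    by (intro add_left_mono mult_left_mono) (auto simp: U_def R_def)
  finally show ?thesis by (simp add: ac_simps)
qed

section \<open>Real estimates\<close>

definition edge_bound :: "nat \<Rightarrow> real \<Rightarrow> real \<Rightarrow> real \<Rightarrow> real" where
  "edge_bound k \<tau> m n = m * n powr (1 / real k) + n * m powr (1 / real k) + \<tau> * sqrt (m * n)"

lemma edge_bound_commute: "edge_bound k \<tau> m n = edge_bound k \<tau> n m"
  by (simp add: edge_bound_def ac_simps)

lemma edge_bound_nonneg:
  "0 \<le> m \<Longrightarrow> 0 \<le> n \<Longrightarrow> 0 \<le> \<tau> \<Longrightarrow> 0 \<le> edge_bound k \<tau> m n"
  by (simp add: edge_bound_def)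

lemma edge_bound_mono:
  assumes "0 \<le> m" "m \<le> m'" "0 \<le> n" "n \<le> n'" "0 \<le> \<tau>"
  shows "edge_bound k \<tau> m n \<le> edge_bound k \<tau> m' n'"
  unfolding edge_bound_def using assms
  by (intro add_mono mult_mono powr_mono2 mult_left_mono real_sqrt_le_mono) auto

lemma powr_inverse_power: "0 \<le> t \<Longrightarrow> 0 < k \<Longrightarrow> (t powr (1 / real k)) ^ k = t"
  by (simp flip: root_powr_inverse)

lemma edge_bound_shrink:
  assumes k: "2 \<le> k" and "0 \<le> a" "4 ^ k * a \<le> m" "0 \<le> n" "0 \<le> \<tau>"
  shows "edge_bound k \<tau> a n \<le> edge_bound k \<tau> m n / 4"
proof -
  define K :: real where "K = 4 ^ k"
  have K16: "16 \<le> K"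
    using power_increasing[of 2 k "4::real"] k by (simp add: K_def)
  have "0 \<le> m" using assms by (smt (verit) zero_le_mult_iff zero_le_power)
  have root: "K powr (1 / real k) = 4"
    using k by (simp add: K_def powr_powr flip: powr_realpow)
  have sqrt_K: "4 \<le> sqrt K"
    using real_sqrt_le_mono[OF K16] by simp
  have "edge_bound k \<tau> a n \<le> edge_bound k \<tau> (m / K) n"
    using assms K16 by (intro edge_bound_mono) (auto simp: K_def field_simps)
  also have "\<dots> \<le> edge_bound k \<tau> m n / 4"
  proof -
    have "m / K * n powr (1 / real k) = m * n powr (1 / real k) / K" by simp
    also have "\<dots> \<le> m * n powr (1 / real k) / 4"
      using K16 \<open>0 \<le> m\<close> by (intro divide_left_mono) auto
    finally have first: "m / K * n powr (1 / real k) \<le> m * n powr (1 / real k) / 4" .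
    have second: "n * (m / K) powr (1 / real k) = n * m powr (1 / real k) / 4"
      by (simp add: powr_divide root)
    have "sqrt (m / K * n) = sqrt (m * n) / sqrt K" by (simp add: real_sqrt_divide)
    also have "\<dots> \<le> sqrt (m * n) / 4"
      using sqrt_K K16 \<open>0 \<le> m\<close> \<open>0 \<le> n\<close> by (intro divide_left_mono) auto
    finally have "\<tau> * sqrt (m / K * n) \<le> \<tau> * (sqrt (m * n) / 4)"
      using \<open>0 \<le> \<tau>\<close> by (rule mult_left_mono)
    with first second show ?thesis unfolding edge_bound_def add_divide_distrib by linarith
  qed
  finally show ?thesis .
qed

lemma power_add_ge:
  fixes a b :: real
  assumes "0 \<le> a" "0 \<le> b" "1 \<le> k"
  shows "a ^ k + b ^ k \<le> (a + b) ^ k"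
  using assms(3)
proof (induction k rule: nat_induct_at_least)
  case (Suc j)
  have "a ^ Suc j + b ^ Suc j \<le> (a + b) * (a ^ j + b ^ j)"
    using assms by (simp add: algebra_simps)
  also have "\<dots> \<le> (a + b) * (a + b) ^ j" using Suc assms by (simp add: mult_left_mono)
  finally show ?case by simp
qed simp

lemma le_cycle_term_of_power_le:
  fixes e m n t c C :: real
  assumes "0 \<le> e" "0 < m" "0 < n" "0 \<le> t" "1 \<le> k" "0 < C" "c \<le> (C\<^sup>2 / 4) ^ k"
    and le: "(e\<^sup>2 / (4 * m * n)) ^ k \<le> c * t"
  shows "e \<le> C * (t powr (1 / (2 * real k)) * sqrt (m * n))"
proof -
  define \<tau> where "\<tau> = t powr (1 / (2 * real k))"
  have "(\<tau>\<^sup>2) ^ k = \<tau> ^ (2 * k)" by (simp add: power_mult)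
  also have "\<dots> = t" using powr_inverse_power[of t "2 * k"] assms by (simp add: \<tau>_def)
  finally have "(\<tau>\<^sup>2) ^ k = t" .
  have "(e\<^sup>2 / (4 * m * n)) ^ k \<le> (C\<^sup>2 / 4) ^ k * t"
    using le mult_right_mono[OF \<open>c \<le> (C\<^sup>2 / 4) ^ k\<close> \<open>0 \<le> t\<close>] by (rule order_trans)
  also have "\<dots> = (C\<^sup>2 * \<tau>\<^sup>2 / 4) ^ k"
    using \<open>(\<tau>\<^sup>2) ^ k = t\<close> by (simp add: power_mult_distrib power_divide)
  finally have "(e\<^sup>2 / (4 * m * n)) ^ k \<le> (C\<^sup>2 * \<tau>\<^sup>2 / 4) ^ k" .
  then have "(e\<^sup>2 / (4 * m * n)) ^ Suc (k - 1) \<le> (C\<^sup>2 * \<tau>\<^sup>2 / 4) ^ Suc (k - 1)"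
    using \<open>1 \<le> k\<close> by simp
  then have "e\<^sup>2 / (4 * m * n) \<le> C\<^sup>2 * \<tau>\<^sup>2 / 4"
    by (rule power_le_imp_le_base) simp
  then have "e\<^sup>2 \<le> C\<^sup>2 * \<tau>\<^sup>2 / 4 * (4 * m * n)"
    using assms by (simp add: pos_divide_le_eq)
  also have "\<dots> = (C * (\<tau> * sqrt (m * n)))\<^sup>2"
    using assms by (simp add: power_mult_distrib)
  finally have "e\<^sup>2 \<le> (C * (\<tau> * sqrt (m * n)))\<^sup>2" .
  then have "e \<le> C * (\<tau> * sqrt (m * n))"
    by (rule power2_le_imp_le) (use assms in \<open>simp add: \<tau>_def\<close>)
  then show ?thesis by (simp add: \<tau>_def)
qed

lemma le_size_term_of_power_le:
  fixes e m n c C :: real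
  assumes "0 \<le> e" "0 < m" "0 < n" "1 \<le> k" "0 < C" "c \<le> C ^ k"
    and le: "e ^ k \<le> c * (m * n ^ k + m ^ k * n)"
  shows "e \<le> C * (m * n powr (1 / real k) + n * m powr (1 / real k))"
proof -
  define G where "G = m * n powr (1 / real k) + n * m powr (1 / real k)"
  have "m * n ^ k + m ^ k * n = (n * m powr (1 / real k)) ^ k + (m * n powr (1 / real k)) ^ k"
    using assms by (simp add: power_mult_distrib powr_inverse_power)
  also have "\<dots> \<le> G ^ k" unfolding G_def using assms by (subst add.commute, intro power_add_ge) auto
  finally have "c * (m * n ^ k + m ^ k * n) \<le> C ^ k * G ^ k"
    using assms by (intro mult_mono) auto
  then have "e ^ k \<le> (C * G) ^ k"
    using le by (simp add: power_mult_distrib)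
  then have "e ^ Suc (k - 1) \<le> (C * G) ^ Suc (k - 1)"
    using \<open>1 \<le> k\<close> by simp
  then have "e \<le> C * G"
    by (rule power_le_imp_le_base) (use assms in \<open>simp add: G_def\<close>)
  then show ?thesis by (simp add: G_def)
qed

lemma power_le_of_moment_le:
  fixes e m n K c :: real
  assumes e: "0 < e" and m: "0 < m" and n: "0 < n" and k: "k = Suc j"
    and le: "(e\<^sup>2 / (4 * m * n)) ^ k \<le> c * ((K * e / m) ^ (k - 1) + (K * e / n) ^ (k - 1)) * e"
  shows "e ^ k \<le> c * K ^ (k - 1) * 4 ^ k * (m * n ^ k + m ^ k * n)"
proof -
  have "(e\<^sup>2 / (4 * m * n)) ^ k = e ^ k * e ^ k / (4 ^ k * m ^ k * n ^ k)"
    by (simp add: power_divide power_mult_distrib flip: power_mult) (simp add: mult_2 power_add)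
  moreover have "c * ((K * e / m) ^ (k - 1) + (K * e / n) ^ (k - 1)) * e =
      c * K ^ j * e ^ k * (n ^ j + m ^ j) / (m ^ j * n ^ j)"
    using m n k by (simp add: power_divide power_mult_distrib field_simps)
  ultimately have "e ^ k * e ^ k / (4 ^ k * m ^ k * n ^ k) \<le> c * K ^ j * e ^ k * (n ^ j + m ^ j) / (m ^ j * n ^ j)"
    using le by simp
  then have "e ^ k * (e ^ k * (m ^ j * n ^ j)) \<le> e ^ k * (c * K ^ j * (n ^ j + m ^ j) * (4 ^ k * m ^ k * n ^ k))"
    using m n by (simp add: field_simps)
  then have "e ^ k * (m ^ j * n ^ j) \<le> c * K ^ j * (n ^ j + m ^ j) * (4 ^ k * m ^ k * n ^ k)"
    using e by (simp add: mult_le_cancel_left_pos)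
  also have "\<dots> = (c * K ^ j * 4 ^ k * (m * n ^ k + m ^ k * n)) * (m ^ j * n ^ j)"
    using k by (simp add: algebra_simps)
  finally show ?thesis using m n k by (simp add: mult_le_cancel_right)
qed

lemma mult_le_quarter_square_power:
  fixes a C :: real
  assumes "0 \<le> a" "2 + 2 * a \<le> C" "1 \<le> k"
  shows "2 * a \<le> (C\<^sup>2 / 4) ^ k"
proof -
  have "2 * a \<le> (1 + a)\<^sup>2" by (simp add: power2_eq_square algebra_simps)
  also have "\<dots> = (2 + 2 * a)\<^sup>2 / 4" by (simp add: power2_eq_square algebra_simps)
  also have "\<dots> \<le> C\<^sup>2 / 4" using assms by (simp add: power_mono)
  also have "\<dots> \<le> (C\<^sup>2 / 4) ^ k"
  proof -
    have "2 * 2 \<le> C * C" using assms by (intro mult_mono) auto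
    then show ?thesis using power_increasing[of 1 k "C\<^sup>2 / 4"] assms by (simp add: power2_eq_square)
  qed
  finally show ?thesis .
qed

lemma le_edge_bound_of_moment_le:
  fixes e m n t a b :: real
  assumes pos: "0 < e" "0 < m" "0 < n" and "0 \<le> t" "0 \<le> a" "0 \<le> b" and k: "2 \<le> k"
    and moment: "(e\<^sup>2 / (4 * m * n)) ^ k \<le> a * t + b * ((4 ^ k * e / m) ^ (k - 1) + (4 ^ k * e / n) ^ (k - 1)) * e"
  shows "e \<le> (2 + 2 * a + 2 * b * 4 ^ (k * k)) * edge_bound k (t powr (1 / (2 * real k))) m n"
proof -
  define C where "C = 2 + 2 * a + 2 * b * 4 ^ (k * k)"
  define B where "B = b * ((4 ^ k * e / m) ^ (k - 1) + (4 ^ k * e / n) ^ (k - 1)) * e"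
  have "2 \<le> C" using assms by (simp add: C_def)
  then have "C \<le> C ^ k" using power_increasing[of 1 k C] k by simp
  have "0 \<le> t powr (1 / (2 * real k))" by simp
  then have bound_ge: "t powr (1 / (2 * real k)) * sqrt (m * n) \<le> edge_bound k (t powr (1 / (2 * real k))) m n"
    "m * n powr (1 / real k) + n * m powr (1 / real k) \<le> edge_bound k (t powr (1 / (2 * real k))) m n"
    using pos by (simp_all add: edge_bound_def)
  show ?thesis
  proof (cases "B \<le> a * t")
    case True
    have "2 * a \<le> (C\<^sup>2 / 4) ^ k"
      using \<open>0 \<le> a\<close> \<open>0 \<le> b\<close> k by (intro mult_le_quarter_square_power) (auto simp: C_def)
    then have "e \<le> C * (t powr (1 / (2 * real k)) * sqrt (m * n))"
      using True moment k \<open>2 \<le> C\<close>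
      by (intro le_cycle_term_of_power_le[where c = "2 * a"]) (simp_all add: pos less_imp_le \<open>0 \<le> t\<close> B_def)
    then show ?thesis using bound_ge(1) \<open>2 \<le> C\<close> by (simp add: C_def) (smt (verit) mult_left_mono)
  next
    case False
    then have "(e\<^sup>2 / (4 * m * n)) ^ k \<le> 2 * b * ((4 ^ k * e / m) ^ (k - 1) + (4 ^ k * e / n) ^ (k - 1)) * e"
      using moment by (simp add: B_def)
    then have "e ^ k \<le> 2 * b * (4 ^ k) ^ (k - 1) * 4 ^ k * (m * n ^ k + m ^ k * n)"
      using k pos by (intro power_le_of_moment_le[where j = "k - 1"]) auto
    also have "2 * b * (4 ^ k) ^ (k - 1) * 4 ^ k = 2 * b * (4::real) ^ (k * k)"
      using k by (simp add: power_mult[symmetric] power_add[symmetric] algebra_simps)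
    finally have "e \<le> C * (m * n powr (1 / real k) + n * m powr (1 / real k))"
      using pos k \<open>2 \<le> C\<close> \<open>C \<le> C ^ k\<close> \<open>0 \<le> a\<close>
      by (intro le_size_term_of_power_le) (auto simp: C_def)
    then show ?thesis using bound_ge(2) \<open>2 \<le> C\<close> by (simp add: C_def) (smt (verit) mult_left_mono)
  qed
qed

section \<open>Disjoint vertex sets\<close>

lemma card_large_values_le:
  fixes f :: "'a \<Rightarrow> real"
  assumes "finite X" and "\<And>x. 0 \<le> f x" and "0 < T"
  shows "T * real (card {x \<in> X. T * (\<Sum>x\<in>X. f x) < f x}) \<le> 1"
proof -
  define H where "H = {x \<in> X. T * (\<Sum>x\<in>X. f x) < f x}"
  have "real (card H) * (T * (\<Sum>x\<in>X. f x)) \<le> (\<Sum>x\<in>H. f x)"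
    using sum_mono[of H "\<lambda>_. T * (\<Sum>x\<in>X. f x)" f] by (simp add: H_def)
  also have "\<dots> \<le> (\<Sum>x\<in>X. f x)" using assms by (intro sum_mono2) (auto simp: H_def)
  finally have "(T * real (card H)) * (\<Sum>x\<in>X. f x) \<le> 1 * (\<Sum>x\<in>X. f x)" by (simp add: ac_simps)
  moreover have "H = {}" if "(\<Sum>x\<in>X. f x) = 0"
    using that assms sum_nonneg_eq_0_iff[of X f] by (auto simp: H_def)
  moreover have "0 \<le> (\<Sum>x\<in>X. f x)" using assms by (simp add: sum_nonneg)
  ultimately have "T * real (card H) \<le> 1"
    by (cases "(\<Sum>x\<in>X. f x) = 0") (auto simp: mult_le_cancel_right)
  then show ?thesis by (simp add: H_def)
qed

lemma edge_pairs_mono: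
  "finite X \<Longrightarrow> finite Y \<Longrightarrow> X' \<subseteq> X \<Longrightarrow> Y' \<subseteq> Y \<Longrightarrow> edge_pairs Es X' Y' \<le> edge_pairs Es X Y"
  unfolding edge_pairs_def by (intro card_mono) auto

lemma edge_pairs_split:
  assumes "finite X" "finite Y" "X' \<subseteq> X" "Y' \<subseteq> Y"
  shows "edge_pairs Es X Y \<le> edge_pairs Es (X - X') (Y - Y') + edge_pairs Es X' Y + edge_pairs Es X Y'"
proof -
  define P where "P = (\<lambda>X Y. {p \<in> X \<times> Y. {fst p, snd p} \<in> Es})"
  have "card (P X Y) \<le> card (P (X - X') (Y - Y') \<union> P X' Y \<union> P X Y')"
    using assms finite_subset[OF assms(3,1)] finite_subset[OF assms(4,2)]
    by (intro card_mono) (auto simp: P_def)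
  also have "\<dots> \<le> card (P (X - X') (Y - Y')) + card (P X' Y) + card (P X Y')"
    by (meson card_Un_le add_right_mono order_trans)
  finally show ?thesis by (simp add: edge_pairs_def P_def)
qed

lemma degree_in_mono: "finite Y \<Longrightarrow> Y' \<subseteq> Y \<Longrightarrow> degree_in Es Y' x \<le> degree_in Es Y x"
  unfolding degree_in_def by (intro card_mono) auto

definition high_degree :: "'a set set \<Rightarrow> nat \<Rightarrow> 'a set \<Rightarrow> 'a set \<Rightarrow> 'a set" where
  "high_degree Es k X Y =
    {x \<in> X. 4 ^ k * real (edge_pairs Es X Y) / real (card X) < real (degree_in Es Y x)}"

lemma card_high_degree_le:
  assumes "finite X" "finite Y"
  shows "4 ^ k * real (card (high_degree Es k X Y)) \<le> real (card X)"
proof (cases "X = {}")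
  case False
  then have "0 < real (card X)" using assms by (simp add: card_gt_0_iff)
  then show ?thesis
    using card_large_values_le[OF assms(1), of "\<lambda>x. real (degree_in Es Y x)" "4 ^ k / real (card X)"]
    by (simp add: high_degree_def sum_degree_in assms field_simps)
qed (simp add: high_degree_def)

lemma card_high_degree_less:
  assumes "finite X" "finite Y" "0 < edge_pairs Es X Y" "1 \<le> k"
  shows "card (high_degree Es k X Y) < card X"
proof -
  have "0 < card X * card Y" using assms edge_pairs_le_card[OF assms(1,2), of Es] by linarith
  then have "0 < card X" by simp
  moreover have "4 * real (card (high_degree Es k X Y)) \<le> 4 ^ k * real (card (high_degree Es k X Y))"
    using power_increasing[of 1 k "4::real"] assms by (intro mult_right_mono) auto
  ultimately show ?thesis using card_high_degree_le[OF assms(1,2), where Es = Es and k = k] by linarith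
qed

lemma high_degree_subset: "high_degree Es k X Y \<subseteq> X"
  by (auto simp: high_degree_def)

lemma edge_bound_high_degree_le:
  assumes "finite X" "finite Y" "2 \<le> k" "0 \<le> \<tau>"
  shows "edge_bound k \<tau> (card (high_degree Es k X Y)) (card Y) \<le> edge_bound k \<tau> (card X) (card Y) / 4"
  using card_high_degree_le[OF assms(1,2), where Es = Es and k = k] assms
  by (intro edge_bound_shrink) simp_all

lemma degree_in_le_of_not_high:
  assumes "x \<in> X - high_degree Es k X Y" "finite Y" "Y' \<subseteq> Y"
  shows "real (degree_in Es Y' x) \<le> 4 ^ k * real (edge_pairs Es X Y) / real (card X)"
  using assms degree_in_mono[OF assms(2,3), of Es x] by (auto simp: high_degree_def not_less)

lemma density_power_mono:
  fixes e e' m n m' n' :: real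
  assumes "e \<le> 2 * e'" "0 \<le> e" "0 < m'" "m' \<le> m" "0 < n'" "n' \<le> n"
  shows "(e\<^sup>2 / (4 * m * n)) ^ k \<le> (e'\<^sup>2 / (m' * n')) ^ k"
proof (rule power_mono)
  have "e\<^sup>2 \<le> (2 * e')\<^sup>2" using assms by (intro power_mono) auto
  then have "e\<^sup>2 / (4 * m * n) \<le> e'\<^sup>2 / (m * n)"
    using assms by (simp add: field_simps)
  also have "\<dots> \<le> e'\<^sup>2 / (m' * n')"
    using assms by (intro divide_left_mono mult_mono) auto
  finally show "e\<^sup>2 / (4 * m * n) \<le> e'\<^sup>2 / (m' * n')" .
qed (use assms in simp)

definition cycle_edge_const :: "nat \<Rightarrow> real" where
  "cycle_edge_const k = 2 + 4 * real ((2 * k) ^ (2 * k)) + 2 * (8 * real k ^ 2) ^ k * 4 ^ (k * k)"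

lemma cycle_edge_const_ge: "2 \<le> cycle_edge_const k"
proof -
  have "0 \<le> 4 * real ((2 * k) ^ (2 * k))" "0 \<le> 2 * (8 * real k ^ 2) ^ k * (4::real) ^ (k * k)"
    by simp_all
  then show ?thesis unfolding cycle_edge_const_def by linarith
qed

lemma edge_pairs_le_of_pruning:
  assumes finV: "finite V" and EV: "\<forall>e\<in>Es. e \<subseteq> V" and XYV: "X \<union> Y \<subseteq> V"
    and disj: "X \<inter> Y = {}" and k: "2 \<le> k" and sub: "X' \<subseteq> X" "Y' \<subseteq> Y"
    and half: "real (edge_pairs Es X Y) \<le> 2 * real (edge_pairs Es X' Y')"
    and pos: "0 < edge_pairs Es X' Y'"
    and deg_X: "\<And>x. x \<in> X' \<Longrightarrow> real (degree_in Es Y' x) \<le> 4 ^ k * real (edge_pairs Es X Y) / real (card X)"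
    and deg_Y: "\<And>y. y \<in> Y' \<Longrightarrow> real (degree_in Es X' y) \<le> 4 ^ k * real (edge_pairs Es X Y) / real (card Y)"
  shows "real (edge_pairs Es X Y) \<le> cycle_edge_const k *
    edge_bound k (real (card (cycles_of_length V Es (2 * k))) powr (1 / (2 * real k))) (card X) (card Y)"
proof -
  define e where "e = real (edge_pairs Es X Y)"
  define e' where "e' = real (edge_pairs Es X' Y')"
  define m where "m = real (card X)"
  define n where "n = real (card Y)"
  define t where "t = real (card (cycles_of_length V Es (2 * k)))"
  define B where "B = (8 * real k ^ 2) ^ k * ((4 ^ k * e / m) ^ (k - 1) + (4 ^ k * e / n) ^ (k - 1))"
  have "finite X" "finite Y" using finV XYV by (auto intro: finite_subset)
  then have fin: "finite X" "finite Y" "finite X'" "finite Y'" using sub by (auto intro: finite_subset)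
  then have "0 < card X' * card Y'" using pos edge_pairs_le_card[OF fin(3,4), of Es] by linarith
  then have card_pos: "0 < card X'" "0 < card Y'" by simp_all
  have card_le: "card X' \<le> card X" "card Y' \<le> card Y" using fin sub by (auto intro: card_mono)
  have "e' \<le> e" using edge_pairs_mono[OF fin(1,2) sub] by (simp add: e_def e'_def)
  then have "0 < e" using pos by (simp add: e'_def)
  have "0 \<le> B" using card_pos card_le pos by (simp add: B_def e_def m_def n_def)
  have "(e\<^sup>2 / (4 * m * n)) ^ k \<le> (e'\<^sup>2 / (real (card X') * real (card Y'))) ^ k"
    using half card_pos card_le by (intro density_power_mono) (auto simp: e_def e'_def m_def n_def)
  also have "\<dots> \<le> 2 * real ((2 * k) ^ (2 * k)) * t + B * e'"
    unfolding t_def B_def e'_def using card_pos XYV sub disj deg_X deg_Y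
    by (intro edge_pairs_power_le_bounded_degree[OF finV EV _ _ k]) (auto simp: e_def m_def n_def ac_simps)
  also have "\<dots> \<le> 2 * real ((2 * k) ^ (2 * k)) * t + B * e"
    using \<open>0 \<le> B\<close> \<open>e' \<le> e\<close> by (simp add: mult_left_mono)
  finally have "e \<le> (2 + 2 * (2 * real ((2 * k) ^ (2 * k))) + 2 * (8 * real k ^ 2) ^ k * 4 ^ (k * k)) *
      edge_bound k (t powr (1 / (2 * real k))) m n"
    using \<open>0 < e\<close> card_pos card_le k
    by (intro le_edge_bound_of_moment_le) (auto simp: B_def t_def m_def n_def ac_simps)
  then show ?thesis by (simp add: cycle_edge_const_def e_def m_def n_def t_def)
qed

lemma edge_pairs_le_disjoint:
  assumes finV: "finite V" and EV: "\<forall>e\<in>Es. e \<subseteq> V" and k: "2 \<le> k"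
  shows "X \<subseteq> V \<Longrightarrow> Y \<subseteq> V \<Longrightarrow> X \<inter> Y = {} \<Longrightarrow>
    real (edge_pairs Es X Y) \<le> cycle_edge_const k *
      edge_bound k (real (card (cycles_of_length V Es (2 * k))) powr (1 / (2 * real k))) (card X) (card Y)"
proof (induction "card X + card Y" arbitrary: X Y rule: less_induct)
  case (less X Y)
  define \<tau> where "\<tau> = real (card (cycles_of_length V Es (2 * k))) powr (1 / (2 * real k))"
  define C where "C = cycle_edge_const k"
  define F where "F = edge_bound k \<tau> (card X) (card Y)"
  define Xh where "Xh = high_degree Es k X Y"
  define Yh where "Yh = high_degree Es k Y X"
  have fin: "finite X" "finite Y"
    using finite_subset[OF less.prems(1) finV] finite_subset[OF less.prems(2) finV] .
  have "0 \<le> F" "2 \<le> C" by (simp_all add: F_def \<tau>_def edge_bound_nonneg C_def cycle_edge_const_ge)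
  show ?case
  proof (cases "edge_pairs Es X Y = 0")
    case False
    have smaller: "real (edge_pairs Es X' Y') \<le> C * F / 4"
      if "X' \<subseteq> X" "Y' \<subseteq> Y" "card X' + card Y' < card X + card Y"
        and "edge_bound k \<tau> (card X') (card Y') \<le> F / 4" for X' Y'
    proof -
      have "X' \<subseteq> V" "Y' \<subseteq> V" "X' \<inter> Y' = {}" using less.prems that(1,2) by auto
      then have "real (edge_pairs Es X' Y') \<le> C * edge_bound k \<tau> (card X') (card Y')"
        using less.hyps[OF that(3)] by (simp add: C_def \<tau>_def)
      also have "\<dots> \<le> C * (F / 4)" using that(4) \<open>2 \<le> C\<close> by (intro mult_left_mono) auto
      finally show ?thesis by simp
    qed
    have sub: "Xh \<subseteq> X" "Yh \<subseteq> Y" by (simp_all add: Xh_def Yh_def high_degree_subset)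
    have "card Xh < card X" "card Yh < card Y"
      using False k card_high_degree_less[OF fin] card_high_degree_less[OF fin(2,1)]
      by (simp_all add: Xh_def Yh_def edge_pairs_commute[of Es Y X])
    moreover have "edge_bound k \<tau> (card Xh) (card Y) \<le> F / 4"
      using edge_bound_high_degree_le[OF fin k] by (simp add: F_def Xh_def \<tau>_def)
    moreover have "edge_bound k \<tau> (card X) (card Yh) \<le> F / 4"
      using edge_bound_high_degree_le[OF fin(2,1) k] by (simp add: F_def Yh_def \<tau>_def edge_bound_commute)
    ultimately have "real (edge_pairs Es Xh Y) \<le> C * F / 4" "real (edge_pairs Es X Yh) \<le> C * F / 4"
      using smaller[OF sub(1) order_refl] smaller[OF order_refl sub(2)] by simp_all
    then have split: "real (edge_pairs Es X Y) \<le> real (edge_pairs Es (X - Xh) (Y - Yh)) + C * F / 2"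
      using edge_pairs_split[OF fin sub, of Es] by simp
    show ?thesis
    proof (cases "real (edge_pairs Es X Y) \<le> 2 * real (edge_pairs Es (X - Xh) (Y - Yh))")
      case True
      then show ?thesis
        using less.prems False fin degree_in_le_of_not_high[of _ X Es k Y "Y - Yh"]
          degree_in_le_of_not_high[of _ Y Es k X "X - Xh"]
        by (intro edge_pairs_le_of_pruning[OF finV EV _ _ k, where X' = "X - Xh" and Y' = "Y - Yh"])
          (auto simp: Xh_def Yh_def edge_pairs_commute[of Es Y X])
    qed (use split in \<open>simp add: C_def F_def \<tau>_def\<close>)
  qed (use \<open>0 \<le> F\<close> \<open>2 \<le> C\<close> in \<open>simp add: C_def F_def \<tau>_def\<close>)
qed

section \<open>Arbitrary vertex sets\<close>

lemma card_separating_subsets: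
  assumes "finite S" "u \<in> S" "v \<in> S" "u \<noteq> v"
  shows "card {T \<in> Pow S. u \<in> T \<and> v \<notin> T} = 2 ^ (card S - 2)"
proof -
  have "bij_betw (\<lambda>T. T - {u}) {T \<in> Pow S. u \<in> T \<and> v \<notin> T} (Pow (S - {u, v}))"
    by (rule bij_betw_byWitness[where f' = "insert u"]) (use assms in auto)
  then have "card {T \<in> Pow S. u \<in> T \<and> v \<notin> T} = card (Pow (S - {u, v}))"
    by (rule bij_betw_same_card)
  also have "\<dots> = 2 ^ (card S - 2)" using assms by (simp add: card_Pow card_Diff_subset)
  finally show ?thesis .
qed

lemma sum_edge_pairs_cuts:
  assumes fin: "finite S" and loops: "\<And>a. {a} \<notin> Es"
  shows "(\<Sum>T\<in>Pow S. edge_pairs Es T (S - T)) = edge_pairs Es S S * 2 ^ (card S - 2)"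
proof -
  define P where "P = {p \<in> S \<times> S. {fst p, snd p} \<in> Es}"
  have "finite P" using fin by (simp add: P_def)
  have "edge_pairs Es T (S - T) = (\<Sum>p\<in>P. if fst p \<in> T \<and> snd p \<notin> T then 1 else 0)" if "T \<subseteq> S" for T
  proof -
    have "{p \<in> T \<times> (S - T). {fst p, snd p} \<in> Es} = {p \<in> P. fst p \<in> T \<and> snd p \<notin> T}"
      using that by (auto simp: P_def)
    then show ?thesis using \<open>finite P\<close> by (simp add: edge_pairs_def sum.If_cases Int_def conj_commute)
  qed
  then have "(\<Sum>T\<in>Pow S. edge_pairs Es T (S - T)) =
      (\<Sum>p\<in>P. \<Sum>T\<in>Pow S. if fst p \<in> T \<and> snd p \<notin> T then 1 else 0)"
    by (simp add: sum.swap[of _ "Pow S" P])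
  also have "\<dots> = (\<Sum>p\<in>P. card {T \<in> Pow S. fst p \<in> T \<and> snd p \<notin> T})"
    using fin by (simp add: sum.If_cases Int_def conj_commute)
  also have "\<dots> = (\<Sum>p\<in>P. 2 ^ (card S - 2))"
    using loops by (intro sum.cong refl card_separating_subsets[OF fin]) (auto simp: P_def)
  finally show ?thesis by (simp add: P_def edge_pairs_def)
qed

lemma exists_large_cut:
  assumes "finite S" and "\<And>a. {a} \<notin> Es"
  obtains T where "T \<subseteq> S" and "edge_pairs Es S S \<le> 4 * edge_pairs Es T (S - T)"
proof -
  note cut = that
  show thesis
  proof (cases "edge_pairs Es S S = 0")
  case False
  then obtain u v where "u \<in> S" "v \<in> S" "{u, v} \<in> Es"
    by (auto simp: edge_pairs_def card_eq_0_iff)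
  then have "u \<noteq> v" using assms(2) by auto
  then have "2 \<le> card S" using \<open>u \<in> S\<close> \<open>v \<in> S\<close> \<open>finite S\<close> card_mono[of S "{u, v}"] by auto
  show thesis
  proof (rule ccontr)
    assume "\<not> thesis"
    then have "4 * edge_pairs Es T (S - T) < edge_pairs Es S S" if "T \<in> Pow S" for T
      using cut[of T] that by fastforce
    then have "(\<Sum>T\<in>Pow S. 4 * edge_pairs Es T (S - T)) < (\<Sum>T\<in>Pow S. edge_pairs Es S S)"
      using \<open>finite S\<close> by (intro sum_strict_mono) auto
    moreover have "(2::nat) ^ card S = 2 ^ 2 * 2 ^ (card S - 2)"
      using \<open>2 \<le> card S\<close> by (metis le_add_diff_inverse power_add)
    ultimately show False
      using sum_edge_pairs_cuts[OF assms] \<open>finite S\<close> by (simp add: card_Pow flip: sum_distrib_left)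
  qed
  qed (use cut in auto)
qed

lemma card_edges_between_le_edge_pairs:
  assumes "finite A" "finite B"
  shows "card (edges_between Es A B) \<le> edge_pairs Es A B"
proof -
  have "edges_between Es A B \<subseteq> (\<lambda>p. {fst p, snd p}) ` {p \<in> A \<times> B. {fst p, snd p} \<in> Es}"
  proof
    fix x assume "x \<in> edges_between Es A B"
    then obtain u v where "u \<in> A" "v \<in> B" "x = {u, v}" "x \<in> Es" by (auto simp: edges_between_def)
    then show "x \<in> (\<lambda>p. {fst p, snd p}) ` {p \<in> A \<times> B. {fst p, snd p} \<in> Es}"
      by (intro image_eqI[where x = "(u, v)"]) auto
  qed
  then have "card (edges_between Es A B) \<le> card ((\<lambda>p. {fst p, snd p}) ` {p \<in> A \<times> B. {fst p, snd p} \<in> Es})"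
    using assms by (intro card_mono) auto
  also have "\<dots> \<le> edge_pairs Es A B"
    unfolding edge_pairs_def by (rule card_image_le) (use assms in auto)
  finally show ?thesis .
qed

lemma edge_pairs_split_overlap:
  assumes "finite A" "finite B"
  shows "edge_pairs Es A B \<le>
    edge_pairs Es (A - B) B + edge_pairs Es (A \<inter> B) (B - A) + edge_pairs Es (A \<inter> B) (A \<inter> B)"
proof -
  define P where "P = (\<lambda>X Y. {p \<in> X \<times> Y. {fst p, snd p} \<in> Es})"
  have "card (P A B) \<le> card (P (A - B) B \<union> P (A \<inter> B) (B - A) \<union> P (A \<inter> B) (A \<inter> B))"
    using assms by (intro card_mono) (auto simp: P_def)
  also have "\<dots> \<le> card (P (A - B) B) + card (P (A \<inter> B) (B - A)) + card (P (A \<inter> B) (A \<inter> B))"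
    by (meson card_Un_le add_right_mono order_trans)
  finally show ?thesis by (simp add: edge_pairs_def P_def)
qed

lemma edge_pairs_le:
  assumes finV: "finite V" and EV: "\<forall>e\<in>Es. e \<subseteq> V" and loops: "\<And>a. {a} \<notin> Es"
    and k: "2 \<le> k" and "A \<subseteq> V" "B \<subseteq> V"
  shows "real (edge_pairs Es A B) \<le> 6 * cycle_edge_const k *
    edge_bound k (real (card (cycles_of_length V Es (2 * k))) powr (1 / (2 * real k))) (card A) (card B)"
proof -
  define F where "F = edge_bound k (real (card (cycles_of_length V Es (2 * k))) powr (1 / (2 * real k)))"
  define C where "C = cycle_edge_const k"
  have fin: "finite A" "finite B"
    using finite_subset[OF \<open>A \<subseteq> V\<close> finV] finite_subset[OF \<open>B \<subseteq> V\<close> finV] .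
  have disjoint: "real (edge_pairs Es X Y) \<le> C * F (card A) (card B)"
    if "X \<subseteq> V" "Y \<subseteq> V" "X \<inter> Y = {}" "card X \<le> card A" "card Y \<le> card B" for X Y
  proof -
    have "real (edge_pairs Es X Y) \<le> C * F (card X) (card Y)"
      using edge_pairs_le_disjoint[OF finV EV k that(1-3)] by (simp add: C_def F_def)
    also have "\<dots> \<le> C * F (card A) (card B)"
      using that cycle_edge_const_ge[of k] by (intro mult_left_mono) (auto simp: C_def F_def intro: edge_bound_mono)
    finally show ?thesis .
  qed
  obtain T where T: "T \<subseteq> A \<inter> B" "edge_pairs Es (A \<inter> B) (A \<inter> B) \<le> 4 * edge_pairs Es T (A \<inter> B - T)"
    using exists_large_cut[of "A \<inter> B" Es] fin loops by blast
  have "real (edge_pairs Es (A - B) B) \<le> C * F (card A) (card B)"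
    by (rule disjoint) (use assms fin in \<open>auto intro: card_mono\<close>)
  moreover have "real (edge_pairs Es (A \<inter> B) (B - A)) \<le> C * F (card A) (card B)"
    by (rule disjoint) (use assms fin in \<open>auto intro: card_mono\<close>)
  moreover have "real (edge_pairs Es T (A \<inter> B - T)) \<le> C * F (card A) (card B)"
    by (rule disjoint) (use assms fin T(1) in \<open>auto intro: card_mono\<close>)
  moreover have "real (edge_pairs Es A B) \<le> real (edge_pairs Es (A - B) B)
      + real (edge_pairs Es (A \<inter> B) (B - A)) + 4 * real (edge_pairs Es T (A \<inter> B - T))"
    using edge_pairs_split_overlap[OF fin, of Es] T(2) by linarith
  ultimately show ?thesis by (simp add: C_def F_def)
qed

theorem mainTheorem4:
  fixes k :: nat
  assumes "k \<ge> 2"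
  shows "\<exists>C>0. \<forall>(V :: nat set) Es A B t.
    simple_graph V Es \<longrightarrow> A \<subseteq> V \<longrightarrow> B \<subseteq> V \<longrightarrow>
    t = card (cycles_of_length V Es (2 * k)) \<longrightarrow>
    real (card (edges_between Es A B)) \<le>
      C * (real (card A) * real (card B) powr (1 / real k)
         + real (card B) * real (card A) powr (1 / real k)
         + real t powr (1 / (2 * real k)) * sqrt (real (card A) * real (card B)))"
proof (intro exI[where x = "6 * cycle_edge_const k"] conjI allI impI)
  show "0 < 6 * cycle_edge_const k" using cycle_edge_const_ge[of k] by simp
  fix V :: "nat set" and Es A B t
  assume "simple_graph V Es" and "A \<subseteq> V" "B \<subseteq> V"
    and t: "t = card (cycles_of_length V Es (2 * k))"
  then have "finite V" "\<forall>e\<in>Es. e \<subseteq> V" "\<And>a. {a} \<notin> Es"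
    by (auto simp: simple_graph_def)
  have "finite A" "finite B"
    using finite_subset[OF \<open>A \<subseteq> V\<close> \<open>finite V\<close>] finite_subset[OF \<open>B \<subseteq> V\<close> \<open>finite V\<close>] .
  then have "real (card (edges_between Es A B)) \<le> real (edge_pairs Es A B)"
    by (simp add: card_edges_between_le_edge_pairs)
  also have "\<dots> \<le> 6 * cycle_edge_const k *
      edge_bound k (real t powr (1 / (2 * real k))) (card A) (card B)"
    using edge_pairs_le[OF \<open>finite V\<close> \<open>\<forall>e\<in>Es. e \<subseteq> V\<close> \<open>\<And>a. {a} \<notin> Es\<close> assms] \<open>A \<subseteq> V\<close> \<open>B \<subseteq> V\<close> t
    by blast
  finally show "real (card (edges_between Es A B)) \<le> 6 * cycle_edge_const k *
      (real (card A) * real (card B) powr (1 / real k) + real (card B) * real (card A) powr (1 / real k)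
       + real t powr (1 / (2 * real k)) * sqrt (real (card A) * real (card B)))"
    by (simp add: edge_bound_def)
qed

end
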